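(* In the setting described in the context, for each $h>0$ there exists $\alpha_{\mathrm{MQ}}(h)>0$ such that \[ \inf_{q_h\in Q_L\setminus\{0\}}\ \sup_{v_h\in V_h\setminus\{0\}}\frac{(v_h,q_h)_{0,I}}{\|v_h\|_{0,I}\,\|q_h\|_{0,I}}\ge\alpha_{\mathrm{MQ}}(h). \]
   Context: Let $I$ be a bounded interval and $(\cdot,\cdot)_{0,I}$, $\|\cdot\|_{0,I}$ the $L^2(I)$ inner product and norm. Let $\mathcal T_h$ be a uniform mesh of $I$ with mesh size $h$, and let $\mathcal S^p(\mathcal T_h)$ denote the univariate B-spline space of degree $p\ge2$ on the open knot vector whose interior knots are the interior mesh points of $\mathcal T_h$ (each with multiplicity one). Set $V_h:=\mathcal S^p(\mathcal T_h)\cap H^1_0(I)$. Dyadic coarsening: $\mathcal M_h^{(0)}=\mathcal T_h$ and for $k=1,\dots,L$ ($L\ge1$) the mesh $\mathcal M_h^{(k)}$ is obtained from $\mathcal M_h^{(k-1)}$ by removing every second interior knot, so that $\mathcal M_h^{(k)}$ has mesh size $2^kh$ and each element of $\mathcal M_h^{(L)}$ is the union of exactly $2^L$ elements of $\mathcal T_h$. Let $Q_L:=\mathcal S^{p-1}(\mathcal M_h^{(L)})$ be the univariate B-spline space of degree $p-1$ on the open knot vector associated with $\mathcal M_h^{(L)}$. *)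

theory Defs
  imports "HOL-Analysis.Analysis" "HOL-Computational_Algebra.Polynomial"
begin

text \<open>The univariate spline space of degree p on the open knot vector
  whose interior knots are the interior mesh points, each with multiplicity one, is the
  space of functions that are polynomials of degree at most p on each (closed) element
  and are C^(p-1) across every interior knot (Curry-Schoenberg).  Only the values on the
  interval matter.\<close>

definition mesh_pt :: "real \<Rightarrow> real \<Rightarrow> nat \<Rightarrow> real" where
  "mesh_pt a H i = a + real i * H"

definition spline_space :: "real \<Rightarrow> real \<Rightarrow> nat \<Rightarrow> nat \<Rightarrow> (real \<Rightarrow> real) set" where
  "spline_space a H M p =
    {f. \<exists>P :: nat \<Rightarrow> real poly.
        (\<forall>i<M. degree (P i) \<le> p \<and>
               (\<forall>x \<in> {mesh_pt a H i .. mesh_pt a H (Suc i)}. f x = poly (P i) x)) \<and>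
        (\<forall>i. Suc i < M \<longrightarrow>
             (\<forall>k<p. poly ((pderiv ^^ k) (P i)) (mesh_pt a H (Suc i)) =
                    poly ((pderiv ^^ k) (P (Suc i))) (mesh_pt a H (Suc i))))}"

definition l2_inner :: "real \<Rightarrow> real \<Rightarrow> (real \<Rightarrow> real) \<Rightarrow> (real \<Rightarrow> real) \<Rightarrow> real" where
  "l2_inner a b f g = integral {a..b} (\<lambda>x. f x * g x)"

definition l2_norm :: "real \<Rightarrow> real \<Rightarrow> (real \<Rightarrow> real) \<Rightarrow> real" where
  "l2_norm a b f = sqrt (l2_inner a b f f)"

text \<open>A function is the zero element of a space of functions on I iff it vanishes on I.\<close>
definition nonzero_on :: "real \<Rightarrow> real \<Rightarrow> (real \<Rightarrow> real) \<Rightarrow> bool" where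
  "nonzero_on a b f \<longleftrightarrow> (\<exists>x\<in>{a..b}. f x \<noteq> 0)"

text \<open>V_h = S^p(T_h) \<inter> H^1_0(I): fine mesh with N elements, h = (b-a)/N.
  (Elements of S^p, p \<ge> 1, are continuous piecewise polynomials, hence in H^1(I);
  membership in H^1_0 means vanishing at the endpoints.)\<close>
definition V_h :: "real \<Rightarrow> real \<Rightarrow> nat \<Rightarrow> nat \<Rightarrow> (real \<Rightarrow> real) set" where
  "V_h a b N p = spline_space a ((b - a) / real N) N p \<inter> {f. f a = 0 \<and> f b = 0}"

text \<open>M_h^(k): obtained from T_h by removing every second interior knot k times; for
  2^L dividing N this is the uniform mesh with N div 2^k elements of size 2^k h.\<close>
definition coarse_mesh_size :: "real \<Rightarrow> real \<Rightarrow> nat \<Rightarrow> nat \<Rightarrow> real" where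
  "coarse_mesh_size a b N k = 2 ^ k * ((b - a) / real N)"

definition Q_L :: "real \<Rightarrow> real \<Rightarrow> nat \<Rightarrow> nat \<Rightarrow> nat \<Rightarrow> (real \<Rightarrow> real) set" where
  "Q_L a b N p L = spline_space a (coarse_mesh_size a b N L) (N div 2 ^ L) (p - 1)"

definition inf_sup_const :: "(real \<Rightarrow> real) set \<Rightarrow> (real \<Rightarrow> real) set \<Rightarrow> real \<Rightarrow> real \<Rightarrow> real" where
  "inf_sup_const V Q a b =
     Inf ((\<lambda>q. Sup ((\<lambda>v. l2_inner a b v q / (l2_norm a b v * l2_norm a b q))
                      ` {v \<in> V. nonzero_on a b v}))
          ` {q \<in> Q. nonzero_on a b q})"

end

theory Submission
  imports Defs
begin

text \<open>Since \<open>Q_L\<close> is finite dimensional, it suffices to find finitely many functions in \<open>V_h\<close> to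
  which no nonzero \<open>q \<in> Q_L\<close> is \<open>L\<^sup>2\<close>-orthogonal; compactness of the unit sphere in coefficient space
  then turns this into a uniform bound. We use the truncated powers \<open>(x\<^sub>i - x)\<^sub>+\<^sup>p\<close> attached to the fine
  mesh points and some polynomials, all corrected so as to vanish at \<open>a\<close> and \<open>b\<close>. Orthogonality to them
  means that a normalised \<open>(p+1)\<close>-fold primitive \<open>G\<close> of \<open>q\<close> vanishes at every fine mesh point, and
  that its derivatives of order \<open>1, ..., p-1\<close> vanish at \<open>b\<close> (at \<open>a\<close> they vanish by construction).

  Take a maximal run of \<open>c\<close> consecutive coarse elements such that \<open>G\<close> vanishes identically on none of
  their fine elements. The derivatives of order \<open>1, ..., p-1\<close> of \<open>G\<close> vanish at both ends of the run:
  at \<open>a\<close> and \<open>b\<close> as just said, and elsewhere because \<open>G\<close> vanishing on a fine element forces \<open>q\<close>, and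
  then \<open>G\<close> and all its derivatives, to vanish on the surrounding coarse element. As \<open>G\<close> vanishes at
  the \<open>2\<^sup>L c + 1\<close> fine mesh points of the run but not identically in between, Rolle's theorem gives
  \<open>2\<^sup>L c + 1\<close> sign alternations of \<open>G'\<close>. Each further derivative up to order \<open>p\<close> gains one,
  thanks to the zeros at the ends, and each of the \<open>p - 1\<close> derivatives of order \<open>p + 1, ..., 2p - 1\<close>,
  that is \<open>q\<close> and its derivatives up to order \<open>p - 2\<close>, loses at most one. So the continuous
  piecewise linear \<open>(p-2)\<close>-nd derivative of \<open>q\<close> alternates \<open>2\<^sup>L c + 1\<close> times on \<open>c\<close> elements, whereas
  it can do so at most \<open>c + 1\<close> times; this is impossible for \<open>L \<ge> 1\<close>.\<close>

section \<open>Uniform meshes and piecewise polynomials\<close>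

lemma mesh_pt_mono: "H \<ge> 0 \<Longrightarrow> i \<le> j \<Longrightarrow> mesh_pt a H i \<le> mesh_pt a H j"
  unfolding mesh_pt_def by (simp add: mult_right_mono)

lemma mesh_pt_strict_mono: "H > 0 \<Longrightarrow> i < j \<Longrightarrow> mesh_pt a H i < mesh_pt a H j"
  unfolding mesh_pt_def by simp

lemma mesh_pt_0 [simp]: "mesh_pt a H 0 = a"
  unfolding mesh_pt_def by simp

lemma mesh_pt_shift: "mesh_pt (mesh_pt a H k) H j = mesh_pt a H (k + j)"
  unfolding mesh_pt_def by (simp add: algebra_simps)

text \<open>A point on an interior knot is assigned to the element on its right, the right end point to the
  last element.\<close>
definition mesh_cell :: "real \<Rightarrow> real \<Rightarrow> nat \<Rightarrow> real \<Rightarrow> nat" where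
  "mesh_cell a H M x = min (M - 1) (nat \<lfloor>(x - a) / H\<rfloor>)"

lemma mesh_cell_less: "M \<ge> 1 \<Longrightarrow> mesh_cell a H M x < M"
  unfolding mesh_cell_def by simp

lemma mesh_cell_mem:
  assumes H: "H > 0" and M: "M \<ge> 1" and x: "x \<in> {a..mesh_pt a H M}"
  shows "x \<in> {mesh_pt a H (mesh_cell a H M x)..mesh_pt a H (Suc (mesh_cell a H M x))}"
proof -
  define k where "k = mesh_cell a H M x"
  have x0: "(x - a) / H \<ge> 0" using x H by auto
  have "real k \<le> (x - a) / H"
    using x0 unfolding k_def mesh_cell_def by (simp add: min_def) linarith
  hence lo: "a + real k * H \<le> x" using H by (simp add: field_simps)
  have "(x - a) / H \<le> real k + 1"
  proof (cases "nat \<lfloor>(x - a) / H\<rfloor> \<le> M - 1")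
    case True
    thus ?thesis using x0 unfolding k_def mesh_cell_def by simp
  next
    case False
    moreover have "(x - a) / H \<le> real M" using x H by (simp add: mesh_pt_def field_simps)
    ultimately show ?thesis using M unfolding k_def mesh_cell_def by (simp add: of_nat_diff)
  qed
  hence "x \<le> a + (real k + 1) * H" using H by (simp add: field_simps)
  thus ?thesis using lo unfolding k_def[symmetric] mesh_pt_def by (auto simp: algebra_simps)
qed

lemma mesh_cell_eq:
  assumes H: "H > 0" and k: "k < M" and x: "x \<in> {mesh_pt a H k..mesh_pt a H (Suc k)}"
  shows "mesh_cell a H M x = k \<or>
    (mesh_cell a H M x = Suc k \<and> Suc k < M \<and> x = mesh_pt a H (Suc k))"
proof -
  have lo: "real k \<le> (x - a) / H" and hi: "(x - a) / H \<le> real k + 1"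
    using x H unfolding mesh_pt_def by (simp_all add: field_simps)
  show ?thesis
  proof (cases "(x - a) / H < real k + 1")
    case True
    hence "\<lfloor>(x - a) / H\<rfloor> = int k" using lo by (simp add: floor_eq_iff)
    thus ?thesis unfolding mesh_cell_def using k by simp
  next
    case False
    hence e: "(x - a) / H = real k + 1" using hi by simp
    hence "mesh_cell a H M x = min (M - 1) (Suc k)" unfolding mesh_cell_def by simp
    moreover have "x = mesh_pt a H (Suc k)" using e H unfolding mesh_pt_def by (simp add: field_simps)
    ultimately show ?thesis using k by (cases "Suc k < M") auto
  qed
qed

lemma Icc_eq_UN_mesh_cells:
  assumes H: "H > 0" and M: "M \<ge> 1"
  shows "{a..mesh_pt a H M} = (\<Union>k<M. {mesh_pt a H k..mesh_pt a H (Suc k)})"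
proof
  show "{a..mesh_pt a H M} \<subseteq> (\<Union>k<M. {mesh_pt a H k..mesh_pt a H (Suc k)})"
    using mesh_cell_mem[OF H M] mesh_cell_less[OF M] by blast
  show "(\<Union>k<M. {mesh_pt a H k..mesh_pt a H (Suc k)}) \<subseteq> {a..mesh_pt a H M}"
  proof (intro UN_least subsetI)
    fix k x assume "k \<in> {..<M}" "x \<in> {mesh_pt a H k..mesh_pt a H (Suc k)}"
    moreover have "a \<le> mesh_pt a H k" "mesh_pt a H (Suc k) \<le> mesh_pt a H M" if "k < M"
      using mesh_pt_mono[where a=a and H=H] H that by (metis le0 less_imp_le mesh_pt_0, simp)
    ultimately show "x \<in> {a..mesh_pt a H M}" by auto
  qed
qed

lemma spline_space_continuous_on:
  assumes H: "H > 0" and M: "M \<ge> 1" and f: "f \<in> spline_space a H M p"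
  shows "continuous_on {a..mesh_pt a H M} f"
proof -
  obtain P where P: "\<forall>i<M. \<forall>x \<in> {mesh_pt a H i..mesh_pt a H (Suc i)}. f x = poly (P i) x"
    using f unfolding spline_space_def by blast
  have "continuous_on (\<Union>k<M. {mesh_pt a H k..mesh_pt a H (Suc k)}) f"
  proof (rule continuous_on_closed_Union)
    fix k assume "k \<in> {..<M}"
    thus "continuous_on {mesh_pt a H k..mesh_pt a H (Suc k)} f"
      using P by (subst continuous_on_cong[OF refl]) (auto intro: continuous_intros)
  qed auto
  thus ?thesis using Icc_eq_UN_mesh_cells[OF H M] by simp
qed

lemma higher_pderiv_uminus: "(pderiv ^^ k) (- P) = - (pderiv ^^ k) (P :: 'a::idom poly)"
  by (induction k) (simp_all add: pderiv_minus)

lemma spline_space_uminus: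
  assumes "f \<in> spline_space a H M p"
  shows "(\<lambda>x. - f x) \<in> spline_space a H M p"
proof -
  obtain P where "\<forall>i<M. degree (P i) \<le> p \<and>
      (\<forall>x \<in> {mesh_pt a H i..mesh_pt a H (Suc i)}. f x = poly (P i) x)"
    and "\<forall>i. Suc i < M \<longrightarrow> (\<forall>k<p. poly ((pderiv ^^ k) (P i)) (mesh_pt a H (Suc i)) =
      poly ((pderiv ^^ k) (P (Suc i))) (mesh_pt a H (Suc i)))"
    using assms unfolding spline_space_def by blast
  thus ?thesis unfolding spline_space_def
    by (intro CollectI exI[of _ "\<lambda>i. - P i"]) (simp add: higher_pderiv_uminus)
qed

lemma higher_pderiv_linear_power:
  "k \<le> n \<Longrightarrow> \<exists>c. (pderiv ^^ k) ([:t, -1:] ^ n) = smult c ([:t, -1::real:] ^ (n - k))"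
proof (induction k)
  case (Suc k)
  then obtain c where c: "(pderiv ^^ k) ([:t, -1:] ^ n) = smult c ([:t, -1::real:] ^ Suc (n - Suc k))"
    by (auto simp: Suc_diff_Suc)
  have "pderiv [:t, -1::real:] = [:-1:]" by (simp add: pderiv_pCons)
  hence "(pderiv ^^ Suc k) ([:t, -1:] ^ n) = smult (- c * real (Suc (n - Suc k))) ([:t, -1:] ^ (n - Suc k))"
    using c by (simp del: power_Suc add: pderiv_smult pderiv_power_Suc flip: smult_minus_left)
       (simp add: algebra_simps)
  thus ?case by blast
qed (auto intro: exI[of _ 1])

lemma poly_higher_pderiv_linear_power_root:
  "k < n \<Longrightarrow> poly ((pderiv ^^ k) ([:t, -1:] ^ n)) (t::real) = 0"
  using higher_pderiv_linear_power[of k n t] by (auto simp: poly_power)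

lemma poly_linear_power: "poly ([:t, -1:] ^ n) x = (t - x) ^ n" for t x :: real
  by (simp add: poly_power)

lemma degree_linear_power: "degree ([:t, -1::real:] ^ n) \<le> n"
  using degree_power_le[of "[:t, -1::real:]" n] by simp

lemma integral_sum_mesh_cells:
  fixes f :: "real \<Rightarrow> real"
  assumes H: "H > 0" and f: "f integrable_on {a..mesh_pt a H M}"
  shows "integral {a..mesh_pt a H M} f = (\<Sum>k<M. integral {mesh_pt a H k..mesh_pt a H (Suc k)} f)"
  using f
proof (induction M)
  case (Suc M)
  have le: "a \<le> mesh_pt a H M" "mesh_pt a H M \<le> mesh_pt a H (Suc M)"
    using mesh_pt_mono[OF less_imp_le[OF H]] by (metis le0 mesh_pt_0, simp)
  have "f integrable_on {a..mesh_pt a H M}"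
    using integrable_on_subinterval[OF Suc.prems] le by auto
  with Suc.IH show ?case
    using Henstock_Kurzweil_Integration.integral_combine[OF le Suc.prems] by simp
qed simp

section \<open>Integrals\<close>

lemma has_integral_sign_point:
  fixes g :: "real \<Rightarrow> real"
  assumes st: "s < t" and g: "(g has_integral I) {s..t}" and gc: "continuous_on {s..t} g"
    and I: "I \<noteq> 0"
  shows "\<exists>w\<in>{s<..<t}. g w * I > 0"
proof (rule ccontr)
  assume "\<not> ?thesis"
  hence "\<forall>w\<in>{s<..<t}. g w * I \<le> 0" by (auto simp: not_less)
  moreover have "continuous_on (closure {s<..<t}) (\<lambda>w. g w * I)"
    using gc st by (auto intro: continuous_intros)
  ultimately have "\<forall>w\<in>{s..t}. g w * I \<le> 0"
    using continuous_le_on_closure[of "{s<..<t}" "\<lambda>w. g w * I" _ 0] st by auto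
  hence "I * I \<le> 0"
    using has_integral_le[OF has_integral_mult_left[OF g] has_integral_0] by auto
  thus False using I not_real_square_gt_zero[of I] by linarith
qed

lemma nonneg_quadratic_imp_discriminant:
  fixes A B C :: real
  assumes q: "\<And>t. 0 \<le> A + 2 * t * B + t\<^sup>2 * C" and C: "C \<ge> 0"
  shows "B\<^sup>2 \<le> A * C"
proof (cases "C = 0")
  case True
  have "0 \<le> A + 2 * (- (A + 1) / (2 * B)) * B + (- (A + 1) / (2 * B))\<^sup>2 * C" by (rule q)
  thus ?thesis using True by (cases "B = 0") (simp_all add: field_simps)
next
  case False
  have "0 \<le> A + 2 * (- B / C) * B + (- B / C)\<^sup>2 * C" by (rule q)
  also have "\<dots> = A - B\<^sup>2 / C" using False by (simp add: field_simps power2_eq_square)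
  finally show ?thesis using C False by (simp add: field_simps)
qed

lemma l2_inner_self_nonneg: "l2_inner a b f f \<ge> 0"
  unfolding l2_inner_def
  by (cases "(\<lambda>x. f x * f x) integrable_on {a..b}")
     (auto intro: integral_nonneg simp: not_integrable_integral)

lemma l2_norm_nonneg: "l2_norm a b f \<ge> 0"
  unfolding l2_norm_def using l2_inner_self_nonneg by simp

lemma l2_norm_uminus: "l2_norm a b (\<lambda>x. - f x) = l2_norm a b f"
  unfolding l2_norm_def l2_inner_def by simp

lemma l2_inner_uminus_left: "l2_inner a b (\<lambda>x. - f x) g = - l2_inner a b f g"
  unfolding l2_inner_def by (simp add: integral_neg)

lemma nonzero_on_if_l2_inner_ne_0:
  assumes "l2_inner a b f g \<noteq> 0"
  shows "nonzero_on a b f"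
proof (rule ccontr)
  assume "\<not> nonzero_on a b f"
  hence "l2_inner a b f g = integral {a..b} (\<lambda>x. 0)"
    unfolding l2_inner_def nonzero_on_def by (intro integral_cong) auto
  with assms show False by simp
qed

lemma l2_inner_Cauchy_Schwarz:
  assumes f: "continuous_on {a..b} f" and g: "continuous_on {a..b} g"
  shows "\<bar>l2_inner a b f g\<bar> \<le> l2_norm a b f * l2_norm a b g"
proof -
  define A B C where "A = l2_inner a b f f" and "B = l2_inner a b f g" and "C = l2_inner a b g g"
  have int: "(\<lambda>x. u x * v x) integrable_on {a..b}" if "u \<in> {f, g}" "v \<in> {f, g}" for u v
    using that f g by (auto intro!: integrable_continuous_interval continuous_intros)
  have "0 \<le> A + 2 * t * B + t\<^sup>2 * C" for t
  proof -
    have "0 \<le> integral {a..b} (\<lambda>x. (f x + t * g x) * (f x + t * g x))"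
      by (rule integral_nonneg) (auto intro!: integrable_continuous_interval continuous_intros f g)
    also have "(\<lambda>x. (f x + t * g x) * (f x + t * g x))
        = (\<lambda>x. f x * f x + (2 * t) * (f x * g x) + t\<^sup>2 * (g x * g x))"
      by (auto simp: algebra_simps power2_eq_square)
    also have "integral {a..b} \<dots> = A + 2 * t * B + t\<^sup>2 * C"
      unfolding A_def B_def C_def l2_inner_def
      by (intro integral_unique has_integral_add has_integral_mult_right integrable_integral int) auto
    finally show ?thesis .
  qed
  hence "B\<^sup>2 \<le> A * C"
    by (rule nonneg_quadratic_imp_discriminant) (simp add: C_def l2_inner_self_nonneg)
  hence "\<bar>B\<bar> \<le> sqrt (A * C)" using real_le_rsqrt by simp
  thus ?thesis unfolding A_def B_def C_def l2_norm_def by (simp add: real_sqrt_mult)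
qed

lemma l2_cosine_le_1:
  assumes "continuous_on {a..b} f" "continuous_on {a..b} g"
  shows "l2_inner a b f g / (l2_norm a b f * l2_norm a b g) \<le> 1"
  using l2_inner_Cauchy_Schwarz[OF assms] l2_norm_nonneg[of a b f] l2_norm_nonneg[of a b g]
  by (cases "l2_norm a b f * l2_norm a b g = 0") (auto simp: divide_le_eq)

text \<open>By Cauchy's formula for repeated integration, \<open>repeated_integral a k g\<close> is \<open>k!\<close> times the
  \<open>(k+1)\<close>-fold primitive of \<open>g\<close> vanishing at \<open>a\<close> together with its first \<open>k\<close> derivatives.\<close>
definition repeated_integral :: "real \<Rightarrow> nat \<Rightarrow> (real \<Rightarrow> real) \<Rightarrow> real \<Rightarrow> real" where
  "repeated_integral a k g t = integral {a..t} (\<lambda>x. (t - x) ^ k * g x)"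

lemma repeated_integral_Suc:
  assumes g: "continuous_on {a..b} g" and t: "t \<in> {a..b}"
  shows "repeated_integral a (Suc k) g t
    = t * repeated_integral a k g t - repeated_integral a k (\<lambda>x. x * g x) t"
proof -
  have gt: "continuous_on {a..t} g" by (rule continuous_on_subset[OF g]) (use t in auto)
  have "(\<lambda>x. (t - x) ^ Suc k * g x) = (\<lambda>x. t * ((t - x) ^ k * g x) - (t - x) ^ k * (x * g x))"
    by (auto simp: algebra_simps)
  moreover have "integral {a..t} (\<lambda>x. t * ((t - x) ^ k * g x) - (t - x) ^ k * (x * g x))
      = t * integral {a..t} (\<lambda>x. (t - x) ^ k * g x) - integral {a..t} (\<lambda>x. (t - x) ^ k * (x * g x))"
    by (subst integral_diff) (auto intro!: integrable_continuous_interval continuous_intros gt)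
  ultimately show ?thesis unfolding repeated_integral_def by simp
qed

lemma repeated_integral_0_has_derivative:
  assumes "continuous_on {a..b} g" "t \<in> {a..b}"
  shows "(repeated_integral a 0 g has_real_derivative g t) (at t within {a..b})"
  unfolding repeated_integral_def using integral_has_real_derivative[OF assms] by simp

lemma repeated_integral_has_derivative:
  assumes "continuous_on {a..b} g" and "t \<in> {a..b}"
  shows "(repeated_integral a (Suc k) g has_real_derivative
    real (Suc k) * repeated_integral a k g t) (at t within {a..b})"
  using assms
proof (induction k arbitrary: g t)
  case 0
  have "continuous_on {a..b} (\<lambda>x. x * g x)" using 0 by (intro continuous_intros)
  from DERIV_diff[OF DERIV_mult'[OF DERIV_ident repeated_integral_0_has_derivative[OF 0]]
    repeated_integral_0_has_derivative[OF this 0(2)]]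
  have "((\<lambda>s. s * repeated_integral a 0 g s - repeated_integral a 0 (\<lambda>x. x * g x) s)
      has_real_derivative real (Suc 0) * repeated_integral a 0 g t) (at t within {a..b})"
    by simp
  thus ?case
    by (rule has_field_derivative_transform_within[OF _ zero_less_one 0(2)])
       (use repeated_integral_Suc[OF 0(1)] in auto)
next
  case (Suc k)
  have "continuous_on {a..b} (\<lambda>x. x * g x)" using Suc by (intro continuous_intros)
  note d = DERIV_diff[OF DERIV_mult'[OF DERIV_ident Suc.IH[OF Suc.prems]] Suc.IH[OF this Suc.prems(2)]]
  have "t * (real (Suc k) * repeated_integral a k g t) + 1 * repeated_integral a (Suc k) g t
      - real (Suc k) * repeated_integral a k (\<lambda>x. x * g x) t
      = real (Suc (Suc k)) * repeated_integral a (Suc k) g t"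
    unfolding repeated_integral_Suc[OF Suc.prems] by (simp add: algebra_simps)
  from DERIV_cong[OF d this]
  have "((\<lambda>s. s * repeated_integral a (Suc k) g s - repeated_integral a (Suc k) (\<lambda>x. x * g x) s)
      has_real_derivative real (Suc (Suc k)) * repeated_integral a (Suc k) g t) (at t within {a..b})" .
  thus ?case
    by (rule has_field_derivative_transform_within[OF _ zero_less_one Suc.prems(2)])
       (use repeated_integral_Suc[OF Suc.prems(1)] in auto)
qed

section \<open>Primitives and sign alternations\<close>

text \<open>Primitives in the sense of the fundamental theorem of calculus, so that \<open>G\<close> need not be
  differentiable at the knots.\<close>
definition primitive_on :: "(real \<Rightarrow> real) \<Rightarrow> (real \<Rightarrow> real) \<Rightarrow> real \<Rightarrow> real \<Rightarrow> bool" where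
  "primitive_on G g \<alpha> \<beta> \<longleftrightarrow>
    (\<forall>s t. \<alpha> \<le> s \<longrightarrow> s \<le> t \<longrightarrow> t \<le> \<beta> \<longrightarrow> (g has_integral (G t - G s)) {s..t})"

definition alternates :: "(real \<Rightarrow> real) \<Rightarrow> real \<Rightarrow> real \<Rightarrow> nat \<Rightarrow> bool" where
  "alternates g \<alpha> \<beta> n \<longleftrightarrow> (\<exists>z::nat \<Rightarrow> real.
    (\<forall>i<n. \<alpha> < z i \<and> z i < \<beta> \<and> g (z i) \<noteq> 0) \<and>
    (\<forall>i. Suc i < n \<longrightarrow> z i < z (Suc i) \<and> g (z i) * g (z (Suc i)) < 0))"

lemma primitive_on_subset:
  "primitive_on G g \<alpha> \<beta> \<Longrightarrow> \<alpha> \<le> \<alpha>' \<Longrightarrow> \<beta>' \<le> \<beta> \<Longrightarrow> primitive_on G g \<alpha>' \<beta>'"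
  unfolding primitive_on_def by auto

lemma primitive_onI:
  assumes "\<And>x. x \<in> {\<alpha>..\<beta>} \<Longrightarrow> (G has_real_derivative g x) (at x within {\<alpha>..\<beta>})"
  shows "primitive_on G g \<alpha> \<beta>"
  unfolding primitive_on_def
proof (intro allI impI)
  fix s t assume st: "\<alpha> \<le> s" "s \<le> t" "t \<le> \<beta>"
  show "(g has_integral G t - G s) {s..t}"
  proof (rule fundamental_theorem_of_calculus[OF st(2)])
    fix x assume "x \<in> {s..t}"
    hence "(G has_real_derivative g x) (at x within {s..t})"
      by (intro DERIV_subset[OF assms]) (use st in auto)
    thus "(G has_vector_derivative g x) (at x within {s..t})"
      by (simp add: has_real_derivative_iff_has_vector_derivative)
  qed
qed

lemma primitive_onI_finite_exceptions:
  assumes S: "finite S" and G: "continuous_on {\<alpha>..\<beta>} G"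
    and d: "\<And>x. x \<in> {\<alpha><..<\<beta>} - S \<Longrightarrow> (G has_real_derivative g x) (at x)"
  shows "primitive_on G g \<alpha> \<beta>"
  unfolding primitive_on_def
proof (intro allI impI)
  fix s t assume st: "\<alpha> \<le> s" "s \<le> t" "t \<le> \<beta>"
  show "(g has_integral G t - G s) {s..t}"
  proof (rule fundamental_theorem_of_calculus_interior_strong[OF S st(2)])
    show "continuous_on {s..t} G" by (rule continuous_on_subset[OF G]) (use st in auto)
    fix x assume "x \<in> {s<..<t} - S"
    with d st show "(G has_vector_derivative g x) (at x)"
      by (simp add: has_real_derivative_iff_has_vector_derivative)
  qed
qed

lemma primitive_on_sign_point:
  assumes G: "primitive_on G g \<alpha> \<beta>" and g: "continuous_on {\<alpha>..\<beta>} g"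
    and st: "\<alpha> \<le> s" "s < t" "t \<le> \<beta>" and D: "G t \<noteq> G s"
  shows "\<exists>w\<in>{s<..<t}. g w * (G t - G s) > 0"
proof (rule has_integral_sign_point[OF st(2)])
  show "(g has_integral G t - G s) {s..t}" using G st unfolding primitive_on_def by auto
  show "continuous_on {s..t} g" by (rule continuous_on_subset[OF g]) (use st in auto)
qed (use D in simp)

lemma primitive_on_const:
  assumes G: "primitive_on G g \<alpha> \<beta>" and st: "\<alpha> \<le> s" "s \<le> t" "t \<le> \<beta>"
    and g: "\<forall>x\<in>{s..t}. g x = 0"
  shows "G t = G s"
proof -
  have "(g has_integral G t - G s) {s..t}" using G st unfolding primitive_on_def by auto
  moreover have "(g has_integral 0) {s..t}" using g by (intro has_integral_is_0) auto
  ultimately have "G t - G s = 0" by (rule has_integral_unique)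
  thus ?thesis by simp
qed

lemma primitive_on_vanishing:
  assumes G: "primitive_on G g \<alpha> \<beta>" and uv: "\<alpha> \<le> u" "v \<le> \<beta>"
    and g: "\<forall>x\<in>{u..v}. g x = 0" and x0: "x0 \<in> {u..v}" "G x0 = 0"
  shows "\<forall>x\<in>{u..v}. G x = 0"
proof
  fix x assume x: "x \<in> {u..v}"
  show "G x = 0"
  proof (cases "x0 \<le> x")
    case True
    thus ?thesis using primitive_on_const[OF G, of x0 x] uv x x0 g by simp
  next
    case False
    thus ?thesis using primitive_on_const[OF G, of x x0] uv x x0 g by simp
  qed
qed

lemma primitive_on_zero_deriv:
  assumes G: "primitive_on G g \<alpha> \<beta>" and g: "continuous_on {\<alpha>..\<beta>} g"
    and st: "\<alpha> \<le> s" "t \<le> \<beta>" and z: "\<forall>x\<in>{s<..<t}. G x = 0" and w: "w \<in> {s<..<t}"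
  shows "g w = 0"
proof -
  define s' t' where "s' = (s + w) / 2" and "t' = (w + t) / 2"
  have o: "s < s'" "s' < w" "w < t'" "t' < t" using w unfolding s'_def t'_def by auto
  have "continuous_on {s'..t'} g" by (rule continuous_on_subset[OF g]) (use o st in auto)
  hence d1: "((\<lambda>u. integral {s'..u} g) has_real_derivative g w) (at w within {s'..t'})"
    using integral_has_real_derivative o by auto
  have "integral {s'..u} g = 0" if "u \<in> {s'..t'}" for u
  proof -
    have "(g has_integral (G u - G s')) {s'..u}" using G that o st unfolding primitive_on_def by auto
    thus ?thesis using z that o by (simp add: integral_unique)
  qed
  hence d0: "((\<lambda>u. integral {s'..u} g) has_real_derivative 0) (at w within {s'..t'})"
    by (intro has_field_derivative_transform_within[OF DERIV_const zero_less_one]) (use o in auto)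
  have "at w within {s'..t'} = at w" using o by (intro at_within_Icc_at) auto
  with d0 d1 have "((\<lambda>u. integral {s'..u} g) has_real_derivative g w) (at w)"
    "((\<lambda>u. integral {s'..u} g) has_real_derivative 0) (at w)" by simp_all
  thus ?thesis by (rule DERIV_unique)
qed

lemma alternates_zero [simp]: "alternates g \<alpha> \<beta> 0"
  unfolding alternates_def by auto

lemma sign_transfer:
  fixes a b x y :: real
  assumes "a * x > 0" "b * y > 0" "x * y < 0"
  shows "a * b < 0"
proof -
  have "(a * b) * (x * y) > 0" using mult_pos_pos[OF assms(1,2)] by (simp add: ac_simps)
  with assms(3) show ?thesis by (auto simp: zero_less_mult_iff mult_less_0_iff)
qed

lemma alternates_of_increments:
  fixes u :: "nat \<Rightarrow> real"
  assumes u: "\<forall>i<m. u i < u (Suc i)" and lo: "\<alpha> \<le> u 0" and hi: "u m \<le> \<beta>"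
    and D: "\<forall>i<m. G (u (Suc i)) \<noteq> G (u i)"
    and A: "\<forall>i. Suc i < m \<longrightarrow> (G (u (Suc i)) - G (u i)) * (G (u (Suc (Suc i))) - G (u (Suc i))) < 0"
    and G: "primitive_on G g \<alpha> \<beta>" and g: "continuous_on {\<alpha>..\<beta>} g"
  shows "alternates g \<alpha> \<beta> m"
proof -
  have rng: "\<alpha> \<le> u i" "u (Suc i) \<le> \<beta>" if "i < m" for i
    using lift_Suc_mono_le_ivl[of "{..<m}" u 0 i] lift_Suc_mono_le_ivl[of "{..<m}" u "Suc i" m]
      u lo hi that by force+
  have "\<exists>w. w \<in> {u i<..<u (Suc i)} \<and> g w * (G (u (Suc i)) - G (u i)) > 0" if "i < m" for i
    using primitive_on_sign_point[OF G g rng(1)[OF that] _ rng(2)[OF that]] u D that by auto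
  then obtain w where w: "\<And>i. i < m \<Longrightarrow>
      w i \<in> {u i<..<u (Suc i)} \<and> g (w i) * (G (u (Suc i)) - G (u i)) > 0"
    by metis
  show ?thesis unfolding alternates_def
  proof (intro exI[of _ w] conjI allI impI)
    fix i assume "i < m"
    with w[of i] rng[of i] show "\<alpha> < w i" "w i < \<beta>" "g (w i) \<noteq> 0" by auto
  next
    fix i assume i: "Suc i < m"
    with w[of i] w[of "Suc i"] show "w i < w (Suc i)" by auto
    show "g (w i) * g (w (Suc i)) < 0"
      by (rule sign_transfer[OF conjunct2[OF w] conjunct2[OF w] A[rule_format, OF i]]) (use i in auto)
  qed
qed

lemma increments_alternate:
  fixes x y z :: real
  shows "x * y < 0 \<Longrightarrow> y * z < 0 \<Longrightarrow> (y - x) * (z - y) < 0"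
  by (smt (verit) mult_neg_neg mult_pos_pos zero_less_mult_iff mult_less_0_iff)

lemma alternates_deriv:
  assumes a: "alternates G \<alpha> \<beta> n" and G: "primitive_on G g \<alpha> \<beta>"
    and g: "continuous_on {\<alpha>..\<beta>} g"
  shows "alternates g \<alpha> \<beta> (n - 1)"
proof (cases "n \<le> 1")
  case True thus ?thesis by (metis alternates_zero diff_is_0_eq)
next
  case False
  obtain z where z1: "\<forall>i<n. \<alpha> < z i \<and> z i < \<beta> \<and> G (z i) \<noteq> 0"
    and z2: "\<forall>i. Suc i < n \<longrightarrow> z i < z (Suc i) \<and> G (z i) * G (z (Suc i)) < 0"
    using a unfolding alternates_def by blast
  show ?thesis
  proof (rule alternates_of_increments[OF _ _ _ _ _ G g, where u=z])
    show "\<forall>i<n - 1. z i < z (Suc i)" "\<alpha> \<le> z 0" "z (n - 1) \<le> \<beta>"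
      using z1 z2 False by (auto simp: less_imp_le)
    show "\<forall>i<n - 1. G (z (Suc i)) \<noteq> G (z i)"
    proof (intro allI impI notI)
      fix i assume "i < n - 1" "G (z (Suc i)) = G (z i)"
      with z2[rule_format, of i] show False by (simp add: not_square_less_zero less_diff_conv)
    qed
    show "\<forall>i. Suc i < n - 1 \<longrightarrow>
        (G (z (Suc i)) - G (z i)) * (G (z (Suc (Suc i))) - G (z (Suc i))) < 0"
      using z2 increments_alternate by (simp add: less_diff_conv)
  qed
qed

lemma increments_alternate_of_zero_ends:
  fixes V :: "nat \<Rightarrow> real"
  assumes V0: "V 0 = 0" and Vn: "V (Suc n) = 0" and n: "n \<ge> 1"
    and nz: "\<And>i. 1 \<le> i \<Longrightarrow> i \<le> n \<Longrightarrow> V i \<noteq> 0"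
    and alt: "\<And>i. 1 \<le> i \<Longrightarrow> i < n \<Longrightarrow> V i * V (Suc i) < 0"
  shows "\<forall>i\<le>n. V (Suc i) \<noteq> V i"
    and "\<forall>i. Suc i \<le> n \<longrightarrow> (V (Suc i) - V i) * (V (Suc (Suc i)) - V (Suc i)) < 0"
proof -
  have step: "(V (Suc i) - V i) * V (Suc i) > 0" if "i < n" for i
  proof -
    have "V i * V (Suc i) \<le> 0" using V0 alt[of i] that by (cases "i = 0") auto
    moreover have "V (Suc i) \<noteq> 0" using nz[of "Suc i"] that by simp
    moreover have "V (Suc i) * V (Suc i) > 0" using calculation(2) by (metis not_real_square_gt_zero)
    ultimately show ?thesis by (simp add: algebra_simps)
  qed
  have sq: "V n * V n > 0" using nz[of n] n by (metis not_real_square_gt_zero order_refl)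
  hence last: "(V (Suc n) - V n) * V n < 0" using Vn by simp
  show "\<forall>i\<le>n. V (Suc i) \<noteq> V i"
  proof (intro allI impI notI)
    fix i assume "i \<le> n" "V (Suc i) = V i"
    with step[of i] last show False by (cases "i = n") auto
  qed
  show "\<forall>i. Suc i \<le> n \<longrightarrow> (V (Suc i) - V i) * (V (Suc (Suc i)) - V (Suc i)) < 0"
  proof (intro allI impI)
    fix i assume i: "Suc i \<le> n"
    show "(V (Suc i) - V i) * (V (Suc (Suc i)) - V (Suc i)) < 0"
    proof (cases "Suc i = n")
      case True
      have "(V (Suc (Suc i)) - V (Suc i)) * - V (Suc i) > 0" "V (Suc i) * - V (Suc i) < 0"
        using last sq True by simp_all
      from sign_transfer[OF step[of i] this] i show ?thesis by simp
    next
      case False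
      with i have "V (Suc i) * V (Suc (Suc i)) < 0" using alt[of "Suc i"] by simp
      from sign_transfer[OF step[of i] step[of "Suc i"] this] False i show ?thesis by simp
    qed
  qed
qed

lemma alternates_deriv_zero_ends:
  assumes a: "alternates G \<alpha> \<beta> n" and n: "n \<ge> 1" and G: "primitive_on G g \<alpha> \<beta>"
    and g: "continuous_on {\<alpha>..\<beta>} g" and G\<alpha>: "G \<alpha> = 0" and G\<beta>: "G \<beta> = 0"
  shows "alternates g \<alpha> \<beta> (Suc n)"
proof -
  obtain z where z1: "\<forall>i<n. \<alpha> < z i \<and> z i < \<beta> \<and> G (z i) \<noteq> 0"
    and z2: "\<forall>i. Suc i < n \<longrightarrow> z i < z (Suc i) \<and> G (z i) * G (z (Suc i)) < 0"
    using a unfolding alternates_def by blast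
  define u where "u i = (if i = 0 then \<alpha> else if i \<le> n then z (i - 1) else \<beta>)" for i
  have nz: "G (u i) \<noteq> 0" if "1 \<le> i" "i \<le> n" for i
    using z1 that by (simp add: u_def)
  have alt: "G (u i) * G (u (Suc i)) < 0" if "1 \<le> i" "i < n" for i
    using z2[rule_format, of "i - 1"] that by (simp add: u_def)
  have "G (u 0) = 0" "G (u (Suc n)) = 0" using G\<alpha> G\<beta> by (simp_all add: u_def)
  note increments = increments_alternate_of_zero_ends[OF this n nz alt]
  moreover have "\<forall>i<Suc n. u i < u (Suc i)"
  proof (intro allI impI)
    fix i assume "i < Suc n"
    with z1 z2[rule_format, of "i - 1"] n show "u i < u (Suc i)"
      by (cases "i = 0"; cases "i = n") (auto simp: u_def)
  qed
  with increments show ?thesis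
    by (intro alternates_of_increments[OF _ _ _ _ _ G g, where u=u]) (auto simp: u_def)
qed

lemma primitive_sign_change_between_zeros:
  assumes G: "primitive_on G g \<alpha> \<beta>" and g: "continuous_on {\<alpha>..\<beta>} g"
    and st: "\<alpha> \<le> s" "t \<le> \<beta>" and Gs: "G s = 0" and Gt: "G t = 0"
    and y: "y \<in> {s<..<t}" and Gy: "G y \<noteq> 0"
  shows "\<exists>w w'. s < w \<and> w < w' \<and> w' < t \<and> g w * g w' < 0"
proof -
  obtain w where w: "w \<in> {s<..<y}" "g w * G y > 0"
    using primitive_on_sign_point[OF G g st(1), of y] y st Gs Gy by auto
  obtain w' where w': "w' \<in> {y<..<t}" "g w' * - G y > 0"
    using primitive_on_sign_point[OF G g _ _ st(2), of y] y st Gt Gy by auto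
  have "G y * - G y < 0" using Gy by simp (metis not_real_square_gt_zero)
  from sign_transfer[OF w(2) w'(2) this] w w' show ?thesis
    by (intro exI[of _ w] exI[of _ w']) auto
qed

text \<open>The alternation points are both points of the first pair, followed by one point of each further
  pair, chosen with the sign required by the alternation.\<close>
lemma alternates_of_sign_changes:
  fixes X :: "nat \<Rightarrow> real"
  assumes r: "r \<ge> 1" and X: "\<forall>i<r. X i < X (Suc i)"
    and ww: "\<And>i. i < r \<Longrightarrow>
      X i < w i \<and> w i < w' i \<and> w' i < X (Suc i) \<and> g (w i) * g (w' i) < 0"
  shows "alternates g (X 0) (X r) (Suc r)"
proof -
  have rng: "X 0 \<le> X i" "X (Suc i) \<le> X r" if "i < r" for i
    using lift_Suc_mono_le_ivl[of "{..<r}" X 0 i] lift_Suc_mono_le_ivl[of "{..<r}" X "Suc i" r]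
      X that by force+
  have r0: "0 < r" using r by simp
  have gw0: "g (w 0) \<noteq> 0" using ww[OF r0] by auto
  define \<sigma> where "\<sigma> k = (-1) ^ k * g (w 0)" for k :: nat
  define z where "z k = (if k = 0 then w 0 else if g (w (k - 1)) * \<sigma> k > 0 then w (k - 1) else w' (k - 1))"
    for k
  have sign: "g (z k) * \<sigma> k > 0" if "k \<le> r" for k
  proof (cases "k = 0")
    case True
    thus ?thesis using gw0 by (simp add: z_def \<sigma>_def) (metis not_real_square_gt_zero)
  next
    case False
    hence k: "k - 1 < r" using that by simp
    have "\<sigma> k \<noteq> 0" "g (w (k - 1)) \<noteq> 0" using gw0 ww[OF k] by (auto simp: \<sigma>_def)
    with ww[OF k] False show ?thesis unfolding z_def
      by (smt (verit) mult_neg_neg mult_pos_pos zero_less_mult_iff mult_less_0_iff)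
  qed
  have loc: "X (k - 1) < z k \<and> z k < X k" if "1 \<le> k" "k \<le> r" for k
  proof -
    have "k - 1 < r" "Suc (k - 1) = k" using that by auto
    with ww[of "k - 1"] show ?thesis unfolding z_def by auto
  qed
  have "z 1 = w' 0" using gw0 by (simp add: z_def \<sigma>_def)
  hence z01: "z 0 < z 1" using ww[OF r0] by (simp add: z_def)
  show ?thesis unfolding alternates_def
  proof (intro exI[of _ z] conjI allI impI)
    fix i assume i: "i < Suc r"
    show "g (z i) \<noteq> 0" using sign[of i] i by auto
    show "X 0 < z i" "z i < X r"
      using i loc[of i] rng[of "i - 1"] ww[OF r0] z01 loc[of 1] r by (cases "i = 0"; force simp: z_def)+
  next
    fix i assume i: "Suc i < Suc r"
    show "z i < z (Suc i)"
      using z01 loc[of i] loc[of "Suc i"] i by (cases "i = 0") auto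
    have "\<sigma> i * \<sigma> (Suc i) = - (g (w 0) * g (w 0))" by (simp add: \<sigma>_def)
    hence "\<sigma> i * \<sigma> (Suc i) < 0" using gw0 by (simp, metis not_real_square_gt_zero)
    from sign_transfer[OF sign[of i] sign[of "Suc i"] this] i show "g (z i) * g (z (Suc i)) < 0"
      by simp
  qed
qed

lemma alternates_deriv_of_zeros:
  fixes X :: "nat \<Rightarrow> real"
  assumes r: "r \<ge> 1" and X: "\<forall>i<r. X i < X (Suc i)"
    and G: "primitive_on G g (X 0) (X r)" and g: "continuous_on {X 0..X r} g"
    and zeros: "\<forall>i\<le>r. G (X i) = 0" and nz: "\<forall>i<r. \<exists>y\<in>{X i<..<X (Suc i)}. G y \<noteq> 0"
  shows "alternates g (X 0) (X r) (Suc r)"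
proof -
  have "\<exists>w w'. X i < w \<and> w < w' \<and> w' < X (Suc i) \<and> g w * g w' < 0" if i: "i < r" for i
  proof -
    have "X 0 \<le> X i" "X (Suc i) \<le> X r"
      using lift_Suc_mono_le_ivl[of "{..<r}" X 0 i] lift_Suc_mono_le_ivl[of "{..<r}" X "Suc i" r]
        X i by force+
    moreover obtain y where "y \<in> {X i<..<X (Suc i)}" "G y \<noteq> 0" using nz i by blast
    ultimately show ?thesis
      using zeros i by (intro primitive_sign_change_between_zeros[OF G g]) auto
  qed
  then obtain w w' where "\<And>i. i < r \<Longrightarrow>
      X i < w i \<and> w i < w' i \<and> w' i < X (Suc i) \<and> g (w i) * g (w' i) < 0"
    by metis
  thus ?thesis by (rule alternates_of_sign_changes[OF r X])
qed

lemma root_between_sign_change: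
  fixes g :: "real \<Rightarrow> real"
  assumes st: "s \<le> t" and g: "continuous_on {s..t} g" and sc: "g s * g t < 0"
  shows "\<exists>w\<in>{s<..<t}. g w = 0"
proof -
  have "\<exists>w. s \<le> w \<and> w \<le> t \<and> g w = 0"
  proof (cases "g s < 0")
    case True
    with sc have "g t > 0" by (simp add: mult_less_0_iff)
    with True show ?thesis using IVT'[OF _ _ st g] by simp
  next
    case False
    with sc have "g s > 0" "g t < 0" by (auto simp: mult_less_0_iff)
    thus ?thesis using IVT2'[OF _ _ st g] by simp
  qed
  then obtain w where "s \<le> w" "w \<le> t" "g w = 0" by blast
  moreover have "w \<noteq> s" "w \<noteq> t" using sc \<open>g w = 0\<close> by auto
  ultimately show ?thesis by auto
qed

lemma poly_eq_0_of_two_roots: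
  fixes P :: "real poly"
  assumes "degree P \<le> 1" "poly P x = 0" "poly P y = 0" "x \<noteq> y"
  shows "P = 0"
proof (rule ccontr)
  assume P: "P \<noteq> 0"
  have "card {x, y} \<le> card {x. poly P x = 0}"
    using assms poly_roots_finite[OF P] by (intro card_mono) auto
  also have "\<dots> \<le> degree P" by (rule card_poly_roots_bound[OF P])
  finally show False using assms by simp
qed

text \<open>Between consecutive alternation points lies a zero, and two zeros cannot share an element,
  since the linear piece would vanish on the whole element and hence at the alternation point
  between them.\<close>
lemma alternates_piecewise_linear_le:
  assumes H: "H > 0" and c: "c \<ge> 1" and g: "continuous_on {\<alpha>..mesh_pt \<alpha> H c} g"
    and lin: "\<forall>k<c. \<exists>P. degree P \<le> 1 \<and>
      (\<forall>x\<in>{mesh_pt \<alpha> H k..mesh_pt \<alpha> H (Suc k)}. g x = poly P x)"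
    and a: "alternates g \<alpha> (mesh_pt \<alpha> H c) n"
  shows "n \<le> Suc c"
proof -
  let ?cell = "\<lambda>k. {mesh_pt \<alpha> H k..mesh_pt \<alpha> H (Suc k)}"
  obtain z where z1: "\<forall>i<n. \<alpha> < z i \<and> z i < mesh_pt \<alpha> H c \<and> g (z i) \<noteq> 0"
    and z2: "\<forall>i. Suc i < n \<longrightarrow> z i < z (Suc i) \<and> g (z i) * g (z (Suc i)) < 0"
    using a unfolding alternates_def by blast
  obtain P where P: "\<And>k. k < c \<Longrightarrow> degree (P k) \<le> 1 \<and> (\<forall>x\<in>?cell k. g x = poly (P k) x)"
    using lin by metis
  have "\<exists>w\<in>{z i<..<z (Suc i)}. g w = 0" if "Suc i < n" for i
    using z1 z2 that
    by (intro root_between_sign_change continuous_on_subset[OF g]) (auto simp: less_imp_le)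
  then obtain w where w: "\<And>i. Suc i < n \<Longrightarrow> w i \<in> {z i<..<z (Suc i)} \<and> g (w i) = 0"
    by metis
  define kk where "kk i = mesh_cell \<alpha> H c (w i)" for i
  have kk: "kk i < c \<and> w i \<in> ?cell (kk i)" if "Suc i < n" for i
    using mesh_cell_less[OF c] mesh_cell_mem[OF H c, of "w i"] w[OF that] z1 that
    unfolding kk_def by (metis Suc_lessD atLeastAtMost_iff greaterThanLessThan_iff less_imp_le order.strict_trans)
  have "inj_on kk {..<n - 1}"
  proof (rule linorder_inj_onI')
    fix i j assume ij: "i \<in> {..<n - 1}" "j \<in> {..<n - 1}" "i < j"
    show "kk i \<noteq> kk j"
    proof
      assume e: "kk i = kk j"
      have si: "Suc i < n" and sj: "Suc j < n" using ij by auto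
      have "z m \<le> z (Suc m)" if "m \<in> {..<n - 1}" for m
        using z2 that by (simp add: less_diff_conv less_imp_le)
      moreover have "Suc i \<le> j" "{Suc i..<j} \<subseteq> {..<n - 1}" using ij by auto
      ultimately have "z (Suc i) \<le> z j" by (rule lift_Suc_mono_le_ivl)
      hence "w i < w j" "z (Suc i) \<in> ?cell (kk i)"
        using w[OF si] w[OF sj] kk[OF si] kk[OF sj] e by auto
      moreover have "poly (P (kk i)) (w i) = 0" "poly (P (kk i)) (w j) = 0"
        using P kk[OF si] kk[OF sj] w[OF si] w[OF sj] e by auto
      ultimately have "g (z (Suc i)) = 0"
        using poly_eq_0_of_two_roots P kk[OF si] by (metis less_irrefl poly_0)
      thus False using z1 si by auto
    qed
  qed
  moreover have "kk ` {..<n - 1} \<subseteq> {..<c}" using kk by auto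
  ultimately have "card {..<n - 1} \<le> card {..<c}" by (intro card_inj_on_le) auto
  thus ?thesis by simp
qed

section \<open>A compactness argument\<close>

lemma compact_unit_box_fun: "compact {c :: 'i \<Rightarrow> real. \<forall>i. c i \<in> {-1..1}}"
proof -
  have "compactin (product_topology (\<lambda>i. euclidean) UNIV) (PiE UNIV (\<lambda>i::'i. {-1..1::real}))"
    by (subst compactin_PiE) auto
  moreover have "PiE UNIV (\<lambda>i::'i. {-1..1::real}) = {c. \<forall>i. c i \<in> {-1..1}}"
    by (auto simp: PiE_UNIV_domain Pi_def)
  ultimately show ?thesis by (simp add: euclidean_product_topology)
qed

lemma compact_pos_bounded_below:
  fixes F :: "'a::topological_space \<Rightarrow> real"
  assumes "compact S" "continuous_on S F" "\<And>x. x \<in> S \<Longrightarrow> F x > 0"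
  shows "\<exists>\<beta>>0. \<forall>x\<in>S. \<beta> \<le> F x"
proof (cases "S = {}")
  case False
  then obtain x0 where "x0 \<in> S" "\<forall>x\<in>S. F x0 \<le> F x"
    using continuous_attains_inf[OF assms(1) False assms(2)] by blast
  with assms(3) show ?thesis by blast
qed (auto intro: exI[of _ 1])

lemma compact_l1_sphere:
  fixes K :: "('i \<Rightarrow> real) set"
  assumes A: "finite A" and K: "closed K" and K_supp: "\<And>c i. c \<in> K \<Longrightarrow> i \<notin> A \<Longrightarrow> c i = 0"
  shows "compact (K \<inter> {c. (\<Sum>i\<in>A. \<bar>c i\<bar>) = 1})"
proof -
  have "continuous_on UNIV (\<lambda>c :: 'i \<Rightarrow> real. \<Sum>i\<in>A. \<bar>c i\<bar>)"
    by (intro continuous_intros continuous_on_product_then_coordinatewise[OF continuous_on_id])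
  hence "closed {c :: 'i \<Rightarrow> real. (\<Sum>i\<in>A. \<bar>c i\<bar>) = 1}"
    by (rule closed_Collect_eq[OF _ continuous_on_const])
  with K have closed: "closed (K \<inter> {c. (\<Sum>i\<in>A. \<bar>c i\<bar>) = 1})" by (rule closed_Int)
  have "K \<inter> {c. (\<Sum>i\<in>A. \<bar>c i\<bar>) = 1} \<subseteq> {c. \<forall>i. c i \<in> {-1..1}}"
  proof (intro subsetI CollectI allI)
    fix c i assume c: "c \<in> K \<inter> {c. (\<Sum>i\<in>A. \<bar>c i\<bar>) = 1}"
    have "\<bar>c i\<bar> \<le> 1"
    proof (cases "i \<in> A")
      case True
      with c member_le_sum[OF True _ A, of "\<lambda>i. \<bar>c i\<bar>"] show ?thesis by auto
    next
      case False
      with c K_supp[of c i] show ?thesis by simp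
    qed
    thus "c i \<in> {-1..1}" by (simp add: abs_le_iff)
  qed
  with compact_Int_closed[OF compact_unit_box_fun closed] show ?thesis by (simp add: Int_absorb1)
qed

lemma homogeneous_lower_bound_l1:
  fixes F :: "('i \<Rightarrow> real) \<Rightarrow> real" and K :: "('i \<Rightarrow> real) set"
  assumes A: "finite A" and K: "closed K" and F: "continuous_on UNIV F" and F0: "\<And>c. F c \<ge> 0"
    and F_hom: "\<And>c t. t > 0 \<Longrightarrow> F (\<lambda>i. t * c i) = t * F c"
    and K_cone: "\<And>c t. c \<in> K \<Longrightarrow> t > 0 \<Longrightarrow> (\<lambda>i. t * c i) \<in> K"
    and K_supp: "\<And>c i. c \<in> K \<Longrightarrow> i \<notin> A \<Longrightarrow> c i = 0"
    and F_pos: "\<And>c. c \<in> K \<Longrightarrow> (\<Sum>i\<in>A. \<bar>c i\<bar>) > 0 \<Longrightarrow> F c > 0"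
  shows "\<exists>\<beta>>0. \<forall>c\<in>K. \<beta> * (\<Sum>i\<in>A. \<bar>c i\<bar>) \<le> F c"
proof -
  define S where "S c = (\<Sum>i\<in>A. \<bar>c i\<bar>)" for c :: "'i \<Rightarrow> real"
  have "compact (K \<inter> {c. S c = 1})"
    unfolding S_def by (rule compact_l1_sphere[OF A K]) (simp add: K_supp)
  moreover have "continuous_on (K \<inter> {c. S c = 1}) F" using F by (rule continuous_on_subset) simp
  moreover have "F c > 0" if "c \<in> K \<inter> {c. S c = 1}" for c using F_pos that unfolding S_def by simp
  ultimately have "\<exists>\<beta>>0. \<forall>c\<in>K \<inter> {c. S c = 1}. \<beta> \<le> F c" by (rule compact_pos_bounded_below)
  then obtain \<beta> where \<beta>: "\<beta> > 0" "\<forall>c\<in>K \<inter> {c. S c = 1}. \<beta> \<le> F c" by blast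
  have "\<beta> * S c \<le> F c" if c: "c \<in> K" for c
  proof (cases "S c > 0")
    case True
    define c' where "c' i = (1 / S c) * c i" for i
    have "S c' = 1" using True unfolding S_def c'_def by (simp add: abs_mult flip: sum_divide_distrib)
    moreover have "c' \<in> K" using K_cone[OF c, of "1 / S c"] True unfolding c'_def by simp
    ultimately have "\<beta> \<le> F c'" using \<beta>(2) by blast
    moreover have "F c = S c * F c'" using F_hom[OF True, of c'] True by (simp add: c'_def)
    ultimately show ?thesis using True by simp
  next
    case False
    hence "S c = 0" unfolding S_def by (meson sum_nonneg abs_ge_zero antisym not_less)
    thus ?thesis using F0 by simp
  qed
  with \<beta>(1) show ?thesis unfolding S_def by blast
qed

lemma exists_term_ge_average:
  fixes f :: "nat \<Rightarrow> real"
  assumes "n > 0" and "X \<le> (\<Sum>j<n. f j)"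
  shows "\<exists>j<n. X / real n \<le> f j"
proof (rule ccontr)
  assume "\<not> ?thesis"
  hence "(\<Sum>j<n. f j) < (\<Sum>j<n. X / real n)" using assms(1) by (intro sum_strict_mono) auto
  thus False using assms by simp
qed

section \<open>The two meshes and the test functions\<close>

locale dyadic_meshes =
  fixes a b :: real and N p L :: nat
  assumes ab: "a < b" and N: "N \<ge> 1" and p: "p \<ge> 2" and L: "L \<ge> 1" and dvd: "2 ^ L dvd N"
begin

definition h where "h = (b - a) / real N"
definition H where "H = coarse_mesh_size a b N L"
definition M where "M = N div 2 ^ L"

abbreviation fine_pt :: "nat \<Rightarrow> real" where "fine_pt \<equiv> mesh_pt a h"
abbreviation coarse_pt :: "nat \<Rightarrow> real" where "coarse_pt \<equiv> mesh_pt a H"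
abbreviation cell :: "real \<Rightarrow> nat" where "cell \<equiv> mesh_cell a H M"

lemma h_pos: "h > 0"
  unfolding h_def using ab N by simp

lemma H_eq: "H = 2 ^ L * h"
  unfolding H_def coarse_mesh_size_def h_def by simp

lemma H_pos: "H > 0"
  using h_pos H_eq by simp

lemma N_eq: "N = 2 ^ L * M"
  unfolding M_def using dvd by simp

lemma M_pos: "M \<ge> 1"
  using N N_eq by (cases M) auto

lemma coarse_pt_eq: "coarse_pt k = fine_pt (k * 2 ^ L)"
  unfolding mesh_pt_def H_eq by (simp add: algebra_simps)

lemma fine_pt_N: "fine_pt N = b"
  unfolding h_def mesh_pt_def using N by simp

lemma coarse_pt_M: "coarse_pt M = b"
  using fine_pt_N coarse_pt_eq N_eq by (simp add: mult.commute)

lemma fine_pt_mem: "i \<le> N \<Longrightarrow> fine_pt i \<in> {a..b}"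
  using mesh_pt_mono[of h 0 i a] mesh_pt_mono[of h i N a] h_pos fine_pt_N by auto

lemma coarse_pt_mem: "k \<le> M \<Longrightarrow> coarse_pt k \<in> {a..b}"
  using mesh_pt_mono[of H 0 k a] mesh_pt_mono[of H k M a] H_pos coarse_pt_M by auto

lemma cell_less: "cell x < M"
  using mesh_cell_less[OF M_pos] .

lemma cell_mem: "x \<in> {a..b} \<Longrightarrow> x \<in> {coarse_pt (cell x)..coarse_pt (Suc (cell x))}"
  using mesh_cell_mem[OF H_pos M_pos] coarse_pt_M by simp

lemma cell_eq:
  "k < M \<Longrightarrow> x \<in> {coarse_pt k..coarse_pt (Suc k)} \<Longrightarrow>
    cell x = k \<or> (cell x = Suc k \<and> Suc k < M \<and> x = coarse_pt (Suc k))"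
  using mesh_cell_eq[OF H_pos] .

lemma Icc_eq_UN_coarse_cells: "{a..b} = (\<Union>k<M. {coarse_pt k..coarse_pt (Suc k)})"
  using Icc_eq_UN_mesh_cells[OF H_pos M_pos, of a] coarse_pt_M by simp

lemma V_h_eq: "V_h a b N p = spline_space a h N p \<inter> {f. f a = 0 \<and> f b = 0}"
  unfolding V_h_def h_def ..

lemma Q_L_eq: "Q_L a b N p L = spline_space a H M (p - 1)"
  unfolding Q_L_def H_def M_def ..

lemma V_h_continuous_on: "f \<in> V_h a b N p \<Longrightarrow> continuous_on {a..b} f"
  using spline_space_continuous_on[OF h_pos N, of f a p] fine_pt_N unfolding V_h_eq by simp

lemma Q_L_continuous_on: "q \<in> Q_L a b N p L \<Longrightarrow> continuous_on {a..b} q"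
  using spline_space_continuous_on[OF H_pos M_pos, of q a "p - 1"] coarse_pt_M unfolding Q_L_eq by simp

lemma V_h_uminus: "f \<in> V_h a b N p \<Longrightarrow> (\<lambda>x. - f x) \<in> V_h a b N p"
  unfolding V_h_eq using spline_space_uminus by auto

text \<open>Up to normalisation, the inner products of \<open>q\<close> with these functions are the values of a
  \<open>(p+1)\<close>-fold primitive of \<open>q\<close> at the fine mesh points and of its derivatives at \<open>b\<close>.\<close>
definition v_test :: "nat \<Rightarrow> real \<Rightarrow> real" where
  "v_test i x = (max (fine_pt i - x) 0) ^ p - ((fine_pt i - a) / (b - a)) ^ p * (b - x) ^ p"

definition w_test :: "nat \<Rightarrow> real \<Rightarrow> real" where
  "w_test k x = (b - a) ^ (p - k) * (b - x) ^ k - (b - x) ^ p"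

lemma v_test_in_V_h:
  assumes i: "i \<le> N"
  shows "v_test i \<in> V_h a b N p"
proof -
  define t where "t = fine_pt i"
  define C where "C = ((t - a) / (b - a)) ^ p"
  define tail where "tail = smult (- C) ([:b, -1:] ^ p)"
  define Q where "Q j = (if j < i then [:t, -1:] ^ p + tail else tail)" for j
  have t: "t \<in> {a..b}" using fine_pt_mem[OF i] unfolding t_def .
  have "v_test i \<in> spline_space a h N p" unfolding spline_space_def
  proof (intro CollectI exI[of _ Q] conjI allI impI ballI)
    fix j assume j: "j < N"
    show "degree (Q j) \<le> p" unfolding Q_def tail_def
      using degree_linear_power[of t p] degree_linear_power[of b p]
      by (auto intro!: degree_add_le degree_diff_le order.trans[OF degree_smult_le])
    fix x assume x: "x \<in> {fine_pt j..fine_pt (Suc j)}"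
    have "x \<le> t" if "j < i" using x mesh_pt_mono[of h "Suc j" i a] h_pos that unfolding t_def by auto
    moreover have "t \<le> x" if "\<not> j < i" using x mesh_pt_mono[of h i j a] h_pos that unfolding t_def by auto
    ultimately show "v_test i x = poly (Q j) x"
      using p unfolding v_test_def Q_def tail_def t_def[symmetric] C_def[symmetric]
      by (auto simp: poly_linear_power)
  next
    fix j k assume "Suc j < N" "k < p"
    thus "poly ((pderiv ^^ k) (Q j)) (fine_pt (Suc j)) = poly ((pderiv ^^ k) (Q (Suc j))) (fine_pt (Suc j))"
      using poly_higher_pderiv_linear_power_root[of k p t]
      by (cases "Suc j = i") (auto simp: Q_def t_def higher_pderiv_add)
  qed
  moreover have "v_test i a = 0"
    using t ab unfolding v_test_def t_def[symmetric] by (simp add: power_divide)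
  moreover have "v_test i b = 0" using t p unfolding v_test_def t_def[symmetric] by simp
  ultimately show ?thesis unfolding V_h_eq by simp
qed

lemma w_test_in_V_h:
  assumes k: "1 \<le> k" "k \<le> p"
  shows "w_test k \<in> V_h a b N p"
proof -
  define W where "W = smult ((b - a) ^ (p - k)) ([:b, -1:] ^ k) + smult (-1) ([:b, -1::real:] ^ p)"
  have "w_test k \<in> spline_space a h N p" unfolding spline_space_def
  proof (intro CollectI exI[of _ "\<lambda>_. W"] conjI allI impI ballI)
    show "degree W \<le> p" unfolding W_def
      using degree_linear_power[of b k] degree_linear_power[of b p] k
      by (auto intro!: degree_add_le degree_diff_le order.trans[OF degree_smult_le])
    fix x show "w_test k x = poly W x" unfolding w_test_def W_def by (simp add: poly_linear_power)
  qed simp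
  moreover have "(b - a) ^ (p - k) * (b - a) ^ k = (b - a) ^ p"
    using k by (simp flip: power_add)
  ultimately show ?thesis using k p unfolding V_h_eq w_test_def by (simp add: power_0_left)
qed

lemma l2_inner_v_test:
  assumes q: "continuous_on {a..b} q" and i: "i \<le> N"
  shows "l2_inner a b (v_test i) q
    = repeated_integral a p q (fine_pt i) - ((fine_pt i - a) / (b - a)) ^ p * repeated_integral a p q b"
proof -
  define t where "t = fine_pt i"
  have t: "t \<in> {a..b}" using fine_pt_mem[OF i] unfolding t_def .
  define C where "C = ((t - a) / (b - a)) ^ p"
  have c1: "continuous_on {a..b} (\<lambda>x. (max (t - x) 0) ^ p * q x)"
    and c2: "continuous_on {a..b} (\<lambda>x. C * ((b - x) ^ p * q x))"
    by (intro continuous_intros q)+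
  have "l2_inner a b (v_test i) q
      = integral {a..b} (\<lambda>x. (max (t - x) 0) ^ p * q x - C * ((b - x) ^ p * q x))"
    unfolding l2_inner_def v_test_def t_def C_def by (rule integral_cong) (simp add: algebra_simps)
  also have "\<dots> = integral {a..b} (\<lambda>x. (max (t - x) 0) ^ p * q x) - C * repeated_integral a p q b"
    using c1 c2 unfolding repeated_integral_def by (simp add: integral_diff integrable_continuous_interval)
  also have "integral {a..b} (\<lambda>x. (max (t - x) 0) ^ p * q x) = integral {a..t} (\<lambda>x. (max (t - x) 0) ^ p * q x)
      + integral {t..b} (\<lambda>x. (max (t - x) 0) ^ p * q x)"
    using t c1
    by (intro Henstock_Kurzweil_Integration.integral_combine[symmetric] integrable_continuous_interval)
       auto
  also have "integral {a..t} (\<lambda>x. (max (t - x) 0) ^ p * q x) = repeated_integral a p q t"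
    unfolding repeated_integral_def by (rule integral_cong) auto
  also have "integral {t..b} (\<lambda>x. (max (t - x) 0) ^ p * q x) = 0"
  proof -
    have "integral {t..b} (\<lambda>x. (max (t - x) 0) ^ p * q x) = integral {t..b} (\<lambda>x. 0)"
      using p by (intro integral_cong) auto
    thus ?thesis by simp
  qed
  finally show ?thesis unfolding t_def C_def by simp
qed

lemma l2_inner_w_test:
  assumes q: "continuous_on {a..b} q"
  shows "l2_inner a b (w_test k) q = (b - a) ^ (p - k) * repeated_integral a k q b - repeated_integral a p q b"
proof -
  have "l2_inner a b (w_test k) q
      = integral {a..b} (\<lambda>x. (b - a) ^ (p - k) * ((b - x) ^ k * q x) - (b - x) ^ p * q x)"
    unfolding l2_inner_def w_test_def by (rule integral_cong) (simp add: algebra_simps)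
  also have "\<dots> = (b - a) ^ (p - k) * integral {a..b} (\<lambda>x. (b - x) ^ k * q x)
      - integral {a..b} (\<lambda>x. (b - x) ^ p * q x)"
    by (subst integral_diff) (auto intro!: integrable_continuous_interval continuous_intros q)
  finally show ?thesis unfolding repeated_integral_def .
qed

end

section \<open>No element of \<open>Q_L\<close> is orthogonal to the test functions\<close>

lemma maximal_run:
  fixes Z :: "nat \<Rightarrow> bool"
  assumes k0: "k0 < M" "\<not> Z k0"
  obtains k1 k2 where "k1 \<le> k0" "k0 < k2" "k2 \<le> M" "k1 = 0 \<or> Z (k1 - 1)" "k2 = M \<or> Z k2"
    "\<And>k. k1 \<le> k \<Longrightarrow> k < k2 \<Longrightarrow> \<not> Z k"
proof -
  define Zl where "Zl = {k. k < k0 \<and> Z k}"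
  define Zr where "Zr = {k. k0 < k \<and> k < M \<and> Z k}"
  have fin: "finite Zl" "finite Zr" unfolding Zl_def Zr_def by auto
  define k1 where "k1 = (if Zl = {} then 0 else Suc (Max Zl))"
  define k2 where "k2 = (if Zr = {} then M else Min Zr)"
  have Max: "Max Zl < k0 \<and> Z (Max Zl)" if "Zl \<noteq> {}"
    using Max_in[OF fin(1) that] unfolding Zl_def by blast
  have Min: "k0 < Min Zr \<and> Min Zr < M \<and> Z (Min Zr)" if "Zr \<noteq> {}"
    using Min_in[OF fin(2) that] unfolding Zr_def by blast
  show thesis
  proof (rule that)
    show "k1 \<le> k0" "k1 = 0 \<or> Z (k1 - 1)"
      using Max unfolding k1_def by (cases "Zl = {}"; simp add: Suc_le_eq)+
    show "k0 < k2" "k2 \<le> M" "k2 = M \<or> Z k2"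
      using Min k0 unfolding k2_def by (cases "Zr = {}"; simp)+
    fix k assume k: "k1 \<le> k" "k < k2"
    have "k \<notin> Zl"
    proof
      assume "k \<in> Zl"
      with k Max_ge[OF fin(1) this] show False unfolding k1_def by (cases "Zl = {}") auto
    qed
    moreover have "k \<notin> Zr"
    proof
      assume "k \<in> Zr"
      with k Min_le[OF fin(2) this] show False unfolding k2_def by (cases "Zr = {}") auto
    qed
    moreover have "k < M" using k Min unfolding k2_def by (cases "Zr = {}") auto
    ultimately show "\<not> Z k" using k0 unfolding Zl_def Zr_def by (cases k k0 rule: linorder_cases) auto
  qed
qed

locale coarse_spline = dyadic_meshes +
  fixes q :: "real \<Rightarrow> real" and P :: "nat \<Rightarrow> real poly"
  assumes P_degree: "\<forall>k<M. degree (P k) \<le> p - 1"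
    and q_eq_P: "\<forall>k<M. \<forall>x\<in>{coarse_pt k..coarse_pt (Suc k)}. q x = poly (P k) x"
    and P_smooth: "\<forall>k. Suc k < M \<longrightarrow> (\<forall>j<p - 1.
      poly ((pderiv ^^ j) (P k)) (coarse_pt (Suc k)) = poly ((pderiv ^^ j) (P (Suc k))) (coarse_pt (Suc k)))"
begin

text \<open>At a knot the piece on the right is used; the two pieces agree there up to order \<open>p - 2\<close>.\<close>
definition q_deriv :: "nat \<Rightarrow> real \<Rightarrow> real" where
  "q_deriv i x = poly ((pderiv ^^ i) (P (cell x))) x"

lemma q_deriv_eq:
  "k < M \<Longrightarrow> x \<in> {coarse_pt k..coarse_pt (Suc k)} \<Longrightarrow> i < p - 1 \<Longrightarrow>
    q_deriv i x = poly ((pderiv ^^ i) (P k)) x"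
  using cell_eq P_smooth unfolding q_deriv_def by fastforce

lemma q_eq_q_deriv_0: "x \<in> {a..b} \<Longrightarrow> q x = q_deriv 0 x"
  using cell_mem[of x] cell_less q_eq_P unfolding q_deriv_def by auto

lemma q_deriv_continuous_on:
  assumes "i < p - 1"
  shows "continuous_on {a..b} (q_deriv i)"
  unfolding Icc_eq_UN_coarse_cells
proof (rule continuous_on_closed_Union)
  fix k assume "k \<in> {..<M}"
  thus "continuous_on {coarse_pt k..coarse_pt (Suc k)} (q_deriv i)"
    using q_deriv_eq[OF _ _ assms] by (subst continuous_on_cong[OF refl]) (auto intro: continuous_intros)
qed auto

lemma q_continuous_on: "continuous_on {a..b} q"
  using q_deriv_continuous_on[of 0] p q_eq_q_deriv_0 by (subst continuous_on_cong[OF refl]) auto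

lemma q_deriv_primitive:
  assumes i: "Suc i < p - 1"
  shows "primitive_on (q_deriv i) (q_deriv (Suc i)) a b"
proof (rule primitive_onI_finite_exceptions[where S = "coarse_pt ` {..M}"])
  show "continuous_on {a..b} (q_deriv i)" using q_deriv_continuous_on i by simp
  fix x assume x: "x \<in> {a<..<b} - coarse_pt ` {..M}"
  define k where "k = cell x"
  have k: "k < M" and "x \<in> {coarse_pt k..coarse_pt (Suc k)}"
    using cell_mem[of x] cell_less x unfolding k_def by auto
  moreover have "x \<noteq> coarse_pt k" "x \<noteq> coarse_pt (Suc k)" using x k by auto
  ultimately have xk: "x \<in> {coarse_pt k<..<coarse_pt (Suc k)}" by auto
  have "(q_deriv i has_real_derivative poly (pderiv ((pderiv ^^ i) (P k))) x) (at x)"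
    by (rule has_field_derivative_transform_within_open[OF poly_DERIV open_greaterThanLessThan xk])
       (use q_deriv_eq[OF k _, of _ i] i in auto)
  moreover have "poly (pderiv ((pderiv ^^ i) (P k))) x = q_deriv (Suc i) x"
    using q_deriv_eq[OF k _ i] q_deriv_eq[OF k _ assms] xk by simp
  ultimately show "(q_deriv i has_real_derivative q_deriv (Suc i) x) (at x)" by simp
qed simp

definition correction_coeff :: real where
  "correction_coeff = repeated_integral a p q b / (b - a) ^ p"

text \<open>\<open>deriv_chain 0\<close> is the \<open>(p+1)\<close>-fold primitive of \<open>q\<close> vanishing at \<open>a\<close> together with its
  first \<open>p\<close> derivatives, corrected by a multiple of \<open>(t - a)\<^sup>p\<close> so that it also vanishes at \<open>b\<close>;
  \<open>deriv_chain j\<close> is its \<open>j\<close>-th derivative, so that \<open>deriv_chain (p + 1) = q\<close>, and the chain continues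
  with the derivatives of \<open>q\<close>.\<close>
definition deriv_chain :: "nat \<Rightarrow> real \<Rightarrow> real" where
  "deriv_chain j = (if j \<le> p
    then (\<lambda>t. (repeated_integral a (p - j) q t - (t - a) ^ (p - j) * correction_coeff) / fact (p - j))
    else q_deriv (j - p - 1))"

lemma deriv_chain_has_derivative:
  assumes j: "j \<le> p" and t: "t \<in> {a..b}"
  shows "(deriv_chain j has_real_derivative deriv_chain (Suc j) t) (at t within {a..b})"
proof (cases "j < p")
  case True
  define k where "k = p - Suc j"
  have pj: "p - j = Suc k" using True unfolding k_def by simp
  have "((\<lambda>t. t - a) has_real_derivative 1) (at t within {a..b})"
    by (auto intro!: derivative_eq_intros)
  from DERIV_cmult_right[OF DERIV_power[OF this, of "Suc k"], of correction_coeff]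
  have "((\<lambda>t. (t - a) ^ Suc k * correction_coeff) has_real_derivative
      real (Suc k) * (t - a) ^ k * correction_coeff) (at t within {a..b})"
    by simp
  from DERIV_cdivide[OF DERIV_diff[OF repeated_integral_has_derivative[OF q_continuous_on t] this],
    where c = "fact (Suc k)"]
  have "((\<lambda>t. (repeated_integral a (Suc k) q t - (t - a) ^ Suc k * correction_coeff) / fact (Suc k))
      has_real_derivative (real (Suc k) * repeated_integral a k q t - real (Suc k) * (t - a) ^ k * correction_coeff)
        / fact (Suc k)) (at t within {a..b})" .
  moreover have "deriv_chain j
      = (\<lambda>t. (repeated_integral a (Suc k) q t - (t - a) ^ Suc k * correction_coeff) / fact (Suc k))"
    unfolding deriv_chain_def using j pj by simp
  moreover have "deriv_chain (Suc j) t
      = (real (Suc k) * repeated_integral a k q t - real (Suc k) * (t - a) ^ k * correction_coeff)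
        / fact (Suc k)"
    unfolding deriv_chain_def using True pj by (simp add: k_def field_simps)
  ultimately show ?thesis by simp
next
  case False
  with j have "j = p" by simp
  with DERIV_diff[OF repeated_integral_0_has_derivative[OF q_continuous_on t] DERIV_const]
  show ?thesis unfolding deriv_chain_def using q_eq_q_deriv_0[OF t] by simp
qed

lemma deriv_chain_continuous_on:
  assumes "j \<le> 2 * p - 1"
  shows "continuous_on {a..b} (deriv_chain j)"
proof (cases "j \<le> p")
  case True
  thus ?thesis by (rule DERIV_continuous_on[OF deriv_chain_has_derivative])
next
  case False
  with assms p q_deriv_continuous_on[of "j - p - 1"] show ?thesis unfolding deriv_chain_def by simp
qed

lemma deriv_chain_primitive:
  assumes j: "j < 2 * p - 1"
  shows "primitive_on (deriv_chain j) (deriv_chain (Suc j)) a b"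
proof (cases "j \<le> p")
  case True
  thus ?thesis using deriv_chain_has_derivative by (intro primitive_onI)
next
  case False
  with j q_deriv_primitive[of "j - p - 1"] show ?thesis unfolding deriv_chain_def
    by (simp add: Suc_diff_Suc)
qed

lemma deriv_chain_at_a: "j < p \<Longrightarrow> deriv_chain j a = 0"
  unfolding deriv_chain_def repeated_integral_def by simp

lemma deriv_chain_Suc_p: "deriv_chain (Suc p) = q_deriv 0"
  unfolding deriv_chain_def by simp

lemma deriv_chain_last: "deriv_chain (2 * p - 1) = q_deriv (p - 2)"
proof -
  have "\<not> 2 * p - 1 \<le> p" "2 * p - 1 - p - 1 = p - 2" using p by auto
  thus ?thesis unfolding deriv_chain_def by simp
qed

lemma l2_inner_v_test_eq_deriv_chain:
  "i \<le> N \<Longrightarrow> l2_inner a b (v_test i) q = fact p * deriv_chain 0 (fine_pt i)"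
  unfolding l2_inner_v_test[OF q_continuous_on] deriv_chain_def correction_coeff_def
  by (simp add: power_divide)

lemma deriv_chain_at_b:
  assumes j: "1 \<le> j" "j < p" and orth: "l2_inner a b (w_test (p - j)) q = 0"
  shows "deriv_chain j b = 0"
proof -
  have "repeated_integral a p q b = (b - a) ^ j * repeated_integral a (p - j) q b"
    using orth j unfolding l2_inner_w_test[OF q_continuous_on] by simp
  moreover have "(b - a) ^ p = (b - a) ^ (p - j) * (b - a) ^ j"
    using j by (simp flip: power_add)
  ultimately show ?thesis using j ab unfolding deriv_chain_def correction_coeff_def by simp
qed

definition vanishes_on_fine_cell :: "nat \<Rightarrow> bool" where
  "vanishes_on_fine_cell k \<longleftrightarrow> (\<exists>j. k * 2 ^ L \<le> j \<and> j < Suc k * 2 ^ L \<and>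
    (\<forall>x\<in>{fine_pt j<..<fine_pt (Suc j)}. deriv_chain 0 x = 0))"

lemma fine_cell_subset:
  assumes "k * 2 ^ L \<le> j" "j < Suc k * 2 ^ L"
  shows "coarse_pt k \<le> fine_pt j" "fine_pt (Suc j) \<le> coarse_pt (Suc k)"
  using assms mesh_pt_mono[of h] h_pos unfolding coarse_pt_eq by simp_all

lemma deriv_chain_vanishes_on_open_interval:
  assumes st: "a \<le> s" "t \<le> b" and z: "\<forall>x\<in>{s<..<t}. deriv_chain 0 x = 0" and m: "m \<le> Suc p"
  shows "\<forall>x\<in>{s<..<t}. deriv_chain m x = 0"
  using m
proof (induction m)
  case (Suc m)
  hence "m < 2 * p - 1" "Suc m \<le> 2 * p - 1" using p by linarith+
  with Suc st show ?case
    by (auto intro: primitive_on_zero_deriv[OF deriv_chain_primitive deriv_chain_continuous_on])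
qed (use z in simp)

lemma piece_eq_0_if_vanishes:
  assumes k: "k < M" and Z: "vanishes_on_fine_cell k"
  shows "P k = 0"
proof -
  obtain j where j: "k * 2 ^ L \<le> j" "j < Suc k * 2 ^ L"
    and z: "\<forall>x\<in>{fine_pt j<..<fine_pt (Suc j)}. deriv_chain 0 x = 0"
    using Z unfolding vanishes_on_fine_cell_def by blast
  note sub = fine_cell_subset[OF j]
  have "a \<le> fine_pt j" "fine_pt (Suc j) \<le> b"
    using sub coarse_pt_mem[of k] coarse_pt_mem[of "Suc k"] k by auto
  from deriv_chain_vanishes_on_open_interval[OF this z, of "Suc p"]
  have "\<forall>x\<in>{fine_pt j<..<fine_pt (Suc j)}. poly (P k) x = 0"
    using q_deriv_eq[OF k, of _ 0] sub p by (auto simp: deriv_chain_Suc_p)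
  hence "{fine_pt j<..<fine_pt (Suc j)} \<subseteq> {x. poly (P k) x = 0}" by auto
  moreover have "fine_pt j < fine_pt (Suc j)" using h_pos by (simp add: mesh_pt_strict_mono)
  ultimately show ?thesis using poly_roots_finite finite_subset infinite_Ioo by blast
qed

lemma deriv_chain_vanishes_on_coarse_cell:
  assumes k: "k < M" and Z: "vanishes_on_fine_cell k" and j: "j \<le> p"
  shows "\<forall>x\<in>{coarse_pt k..coarse_pt (Suc k)}. deriv_chain j x = 0"
proof -
  obtain i where i: "k * 2 ^ L \<le> i" "i < Suc k * 2 ^ L"
    and z: "\<forall>x\<in>{fine_pt i<..<fine_pt (Suc i)}. deriv_chain 0 x = 0"
    using Z unfolding vanishes_on_fine_cell_def by blast
  note sub = fine_cell_subset[OF i]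
  have ab: "a \<le> coarse_pt k" "coarse_pt (Suc k) \<le> b" using coarse_pt_mem[of k] coarse_pt_mem[of "Suc k"] k by auto
  define x0 where "x0 = (fine_pt i + fine_pt (Suc i)) / 2"
  have "fine_pt i < fine_pt (Suc i)" using h_pos by (simp add: mesh_pt_strict_mono)
  hence x0: "x0 \<in> {fine_pt i<..<fine_pt (Suc i)}" "x0 \<in> {coarse_pt k..coarse_pt (Suc k)}"
    using sub unfolding x0_def by auto
  have zero_at_x0: "deriv_chain m x0 = 0" if "m \<le> p" for m
    using deriv_chain_vanishes_on_open_interval[OF order_trans[OF ab(1) sub(1)] order_trans[OF sub(2) ab(2)] z,
      of m] x0 that by simp
  have "\<forall>x\<in>{coarse_pt k..coarse_pt (Suc k)}. deriv_chain (p - m) x = 0" if "m \<le> p" for m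
    using that
  proof (induction m)
    case 0
    have "\<forall>x\<in>{coarse_pt k..coarse_pt (Suc k)}. deriv_chain (Suc p) x = 0"
      using q_deriv_eq[OF k, of _ 0] piece_eq_0_if_vanishes[OF k Z] p by (simp add: deriv_chain_Suc_p)
    moreover have "p < 2 * p - 1" using p by simp
    ultimately show ?case
      using primitive_on_vanishing[OF deriv_chain_primitive ab] zero_at_x0[of p] x0 by simp
  next
    case (Suc m)
    hence "Suc (p - Suc m) = p - m" "p - Suc m < 2 * p - 1" by auto
    with Suc show ?case
      using primitive_on_vanishing[OF deriv_chain_primitive ab] zero_at_x0[of "p - Suc m"] x0 by simp
  qed
  from this[of "p - j"] j show ?thesis by simp
qed

lemma deriv_chain_alternations:
  assumes \<alpha>\<beta>: "a \<le> \<alpha>" "\<beta> \<le> b" and n: "n \<ge> 1"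
    and ends: "\<And>j. 1 \<le> j \<Longrightarrow> j < p \<Longrightarrow> deriv_chain j \<alpha> = 0 \<and> deriv_chain j \<beta> = 0"
    and start: "alternates (deriv_chain 1) \<alpha> \<beta> n"
  shows "alternates (q_deriv (p - 2)) \<alpha> \<beta> n"
proof -
  have prim: "primitive_on (deriv_chain j) (deriv_chain (Suc j)) \<alpha> \<beta>" if "j < 2 * p - 1" for j
    using primitive_on_subset[OF deriv_chain_primitive[OF that] \<alpha>\<beta>] .
  have cont: "continuous_on {\<alpha>..\<beta>} (deriv_chain j)" if "j \<le> 2 * p - 1" for j
    by (rule continuous_on_subset[OF deriv_chain_continuous_on[OF that]]) (use \<alpha>\<beta> in auto)
  have up: "alternates (deriv_chain (Suc m)) \<alpha> \<beta> (n + m)" if "m \<le> p - 1" for m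
    using that
  proof (induction m)
    case (Suc m)
    hence "Suc m < 2 * p - 1" "Suc (Suc m) \<le> 2 * p - 1" "1 \<le> Suc m" "Suc m < p" using p by auto
    with Suc ends n show ?case
      using alternates_deriv_zero_ends[OF _ _ prim cont, of "Suc m" "n + m"] by simp
  qed (use start in simp)
  have down: "alternates (deriv_chain (p + m)) \<alpha> \<beta> (n + (p - 1) - m)" if "m \<le> p - 1" for m
    using that
  proof (induction m)
    case 0
    thus ?case using up[of "p - 1"] p by simp
  next
    case (Suc m)
    hence "p + m < 2 * p - 1" "Suc (p + m) \<le> 2 * p - 1" using p by auto
    from alternates_deriv[OF Suc.IH prim[OF this(1)] cont[OF this(2)]] Suc.prems
    show ?case by simp
  qed
  have last: "2 * p - 1 = p + (p - 1)" using p by simp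
  from down[of "p - 1"] have "alternates (deriv_chain (2 * p - 1)) \<alpha> \<beta> n" by (subst last) simp
  thus ?thesis by (simp only: deriv_chain_last)
qed

lemma q_deriv_alternations_le:
  assumes c: "c \<ge> 1" "k1 + c \<le> M" and alt: "alternates (q_deriv (p - 2)) (coarse_pt k1) (coarse_pt (k1 + c)) n"
  shows "n \<le> Suc c"
proof (rule alternates_piecewise_linear_le[OF H_pos c(1)])
  have "continuous_on {coarse_pt k1..coarse_pt (k1 + c)} (q_deriv (p - 2))"
    by (rule continuous_on_subset[OF q_deriv_continuous_on])
       (use coarse_pt_mem[of k1] coarse_pt_mem[of "k1 + c"] c p in auto)
  thus "continuous_on {coarse_pt k1..mesh_pt (coarse_pt k1) H c} (q_deriv (p - 2))"
    by (simp add: mesh_pt_shift)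
  show "alternates (q_deriv (p - 2)) (coarse_pt k1) (mesh_pt (coarse_pt k1) H c) n"
    using alt by (simp add: mesh_pt_shift)
  show "\<forall>k<c. \<exists>Q. degree Q \<le> 1 \<and>
      (\<forall>x\<in>{mesh_pt (coarse_pt k1) H k..mesh_pt (coarse_pt k1) H (Suc k)}. q_deriv (p - 2) x = poly Q x)"
  proof (intro allI impI exI conjI)
    fix k assume "k < c"
    hence k: "k1 + k < M" using c by simp
    have "degree (P (k1 + k)) \<le> p - 1" using P_degree k by simp
    thus "degree ((pderiv ^^ (p - 2)) (P (k1 + k))) \<le> 1" by (simp add: degree_higher_pderiv)
    show "\<forall>x\<in>{mesh_pt (coarse_pt k1) H k..mesh_pt (coarse_pt k1) H (Suc k)}.
        q_deriv (p - 2) x = poly ((pderiv ^^ (p - 2)) (P (k1 + k))) x"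
      using q_deriv_eq[OF k, of _ "p - 2"] p by (simp add: mesh_pt_shift)
  qed
qed

lemma deriv_chain_zero_at_run_ends:
  assumes orth_w: "\<forall>k. 1 \<le> k \<and> k < p \<longrightarrow> l2_inner a b (w_test k) q = 0"
    and k12: "k1 \<le> k2" "k2 \<le> M"
    and left: "k1 = 0 \<or> vanishes_on_fine_cell (k1 - 1)"
    and right: "k2 = M \<or> vanishes_on_fine_cell k2"
    and j: "1 \<le> j" "j < p"
  shows "deriv_chain j (coarse_pt k1) = 0 \<and> deriv_chain j (coarse_pt k2) = 0"
proof
  show "deriv_chain j (coarse_pt k1) = 0"
  proof (cases "k1 = 0")
    case False
    with left k12 have "vanishes_on_fine_cell (k1 - 1)" "k1 - 1 < M" by auto
    from deriv_chain_vanishes_on_coarse_cell[OF this(2,1), of j] False j H_pos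
    show ?thesis by (auto simp: mesh_pt_mono)
  qed (use deriv_chain_at_a j in simp)
  show "deriv_chain j (coarse_pt k2) = 0"
  proof (cases "k2 = M")
    case True
    thus ?thesis using deriv_chain_at_b j orth_w coarse_pt_M by simp
  next
    case False
    with right k12 have "vanishes_on_fine_cell k2" "k2 < M" by auto
    from deriv_chain_vanishes_on_coarse_cell[OF this(2,1), of j] j H_pos
    show ?thesis by (auto simp: mesh_pt_mono)
  qed
qed

lemma deriv_chain_1_alternates_on_run:
  assumes orth_v: "\<forall>i\<le>N. l2_inner a b (v_test i) q = 0"
    and k12: "k1 < k2" "k2 \<le> M"
    and free: "\<And>k. k1 \<le> k \<Longrightarrow> k < k2 \<Longrightarrow> \<not> vanishes_on_fine_cell k"
  shows "alternates (deriv_chain 1) (coarse_pt k1) (coarse_pt k2) (Suc (2 ^ L * (k2 - k1)))"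
proof -
  define r where "r = 2 ^ L * (k2 - k1)"
  define X where "X i = fine_pt (k1 * 2 ^ L + i)" for i
  have r_eq: "k1 * 2 ^ L + r = k2 * 2 ^ L" using k12 unfolding r_def by (simp add: algebra_simps)
  have X0: "X 0 = coarse_pt k1" and Xr: "X r = coarse_pt k2"
    unfolding X_def coarse_pt_eq using r_eq by simp_all
  have ab: "a \<le> X 0" "X r \<le> b" using coarse_pt_mem[of k1] coarse_pt_mem[of k2] k12 X0 Xr by auto
  have "alternates (deriv_chain 1) (X 0) (X r) (Suc r)"
  proof (rule alternates_deriv_of_zeros)
    show "r \<ge> 1" using k12 unfolding r_def by simp
    show "\<forall>i<r. X i < X (Suc i)" unfolding X_def using h_pos by (simp add: mesh_pt_strict_mono)
    show "primitive_on (deriv_chain 0) (deriv_chain 1) (X 0) (X r)"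
      using primitive_on_subset[OF deriv_chain_primitive ab] p by simp
    show "continuous_on {X 0..X r} (deriv_chain 1)"
      by (rule continuous_on_subset[OF deriv_chain_continuous_on]) (use ab p in auto)
    show "\<forall>i\<le>r. deriv_chain 0 (X i) = 0"
    proof (intro allI impI)
      fix i assume "i \<le> r"
      hence "k1 * 2 ^ L + i \<le> N" using r_eq k12 N_eq by (metis add_le_mono le_refl mult.commute mult_le_mono1 order.trans)
      thus "deriv_chain 0 (X i) = 0" using orth_v l2_inner_v_test_eq_deriv_chain unfolding X_def by simp
    qed
    show "\<forall>i<r. \<exists>y\<in>{X i<..<X (Suc i)}. deriv_chain 0 y \<noteq> 0"
    proof (intro allI impI)
      fix i assume i: "i < r"
      define k where "k = (k1 * 2 ^ L + i) div 2 ^ L"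
      have "k * 2 ^ L \<le> k1 * 2 ^ L + i" "k1 * 2 ^ L + i < Suc k * 2 ^ L"
        unfolding k_def
        by (metis div_mult_mod_eq le_add1,
            metis add.commute add_less_cancel_left div_mult_mod_eq mod_less_divisor mult_Suc
              zero_less_numeral zero_less_power)
      moreover have "k1 \<le> k" unfolding k_def by simp
      moreover have "k < k2" unfolding k_def using i r_eq by (intro less_mult_imp_div_less) simp
      ultimately show "\<exists>y\<in>{X i<..<X (Suc i)}. deriv_chain 0 y \<noteq> 0"
        using free[of k] unfolding vanishes_on_fine_cell_def X_def by auto
    qed
  qed
  from this[unfolded X0 Xr] show ?thesis unfolding r_def .
qed

theorem pieces_eq_0_if_orthogonal:
  assumes orth_v: "\<forall>i\<le>N. l2_inner a b (v_test i) q = 0"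
    and orth_w: "\<forall>k. 1 \<le> k \<and> k < p \<longrightarrow> l2_inner a b (w_test k) q = 0"
  shows "\<forall>k<M. P k = 0"
proof (rule ccontr)
  assume "\<not> ?thesis"
  then obtain k0 where k0: "k0 < M" "\<not> vanishes_on_fine_cell k0"
    using piece_eq_0_if_vanishes by blast
  then obtain k1 k2 where k12: "k1 \<le> k0" "k0 < k2" "k2 \<le> M"
    and ends: "k1 = 0 \<or> vanishes_on_fine_cell (k1 - 1)" "k2 = M \<or> vanishes_on_fine_cell k2"
    and free: "\<And>k. k1 \<le> k \<Longrightarrow> k < k2 \<Longrightarrow> \<not> vanishes_on_fine_cell k"
    by (rule maximal_run) blast
  define c where "c = k2 - k1"
  have c: "c \<ge> 1" "k1 + c \<le> M" and k2: "k2 = k1 + c" using k12 unfolding c_def by auto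
  have "alternates (q_deriv (p - 2)) (coarse_pt k1) (coarse_pt k2) (Suc (2 ^ L * c))"
    using deriv_chain_alternations deriv_chain_zero_at_run_ends[OF orth_w _ _ ends]
      deriv_chain_1_alternates_on_run[OF orth_v] coarse_pt_mem k12 free
    unfolding c_def by simp
  hence "Suc (2 ^ L * c) \<le> Suc c" using q_deriv_alternations_le[OF c] unfolding k2 by blast
  moreover have "2 * c \<le> 2 ^ L * c" using L by (simp add: self_le_power)
  ultimately show False using c by simp
qed

section \<open>Coefficients and the inf-sup bound\<close>

lemma l2_inner_eq_pieces:
  assumes v: "continuous_on {a..b} v"
  shows "l2_inner a b v q = (\<Sum>k<M. \<Sum>l<p.
    coeff (P k) l * integral {coarse_pt k..coarse_pt (Suc k)} (\<lambda>x. v x * x ^ l))"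
proof -
  have "(\<lambda>x. v x * q x) integrable_on {a..coarse_pt M}"
    using v q_continuous_on coarse_pt_M by (auto intro!: integrable_continuous_interval continuous_intros)
  from integral_sum_mesh_cells[OF H_pos this]
  have "l2_inner a b v q = (\<Sum>k<M. integral {coarse_pt k..coarse_pt (Suc k)} (\<lambda>x. v x * q x))"
    unfolding l2_inner_def coarse_pt_M .
  also have "\<dots> = (\<Sum>k<M. \<Sum>l<p.
      coeff (P k) l * integral {coarse_pt k..coarse_pt (Suc k)} (\<lambda>x. v x * x ^ l))"
  proof (rule sum.cong[OF refl])
    fix k assume k: "k \<in> {..<M}"
    hence "{coarse_pt k..coarse_pt (Suc k)} \<subseteq> {a..b}"
      using coarse_pt_mem[of k] coarse_pt_mem[of "Suc k"] by auto
    hence vk: "continuous_on {coarse_pt k..coarse_pt (Suc k)} v" using v by (rule continuous_on_subset[rotated])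
    have "{..degree (P k)} \<subseteq> {..<p}" using P_degree k p by auto
    hence "poly (P k) x = (\<Sum>l<p. coeff (P k) l * x ^ l)" for x
      unfolding poly_altdef by (intro sum.mono_neutral_left) (auto simp: coeff_eq_0)
    hence "integral {coarse_pt k..coarse_pt (Suc k)} (\<lambda>x. v x * q x)
        = integral {coarse_pt k..coarse_pt (Suc k)} (\<lambda>x. \<Sum>l<p. coeff (P k) l * (v x * x ^ l))"
      using q_eq_P k by (intro integral_cong) (simp add: sum_distrib_left algebra_simps)
    also have "\<dots> = (\<Sum>l<p. coeff (P k) l * integral {coarse_pt k..coarse_pt (Suc k)} (\<lambda>x. v x * x ^ l))"
      by (subst integral_sum) (auto intro!: integrable_continuous_interval continuous_intros vk)
    finally show "integral {coarse_pt k..coarse_pt (Suc k)} (\<lambda>x. v x * q x) = \<dots>" .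
  qed
  finally show ?thesis .
qed

end

context dyadic_meshes
begin

text \<open>An element of \<open>Q_L\<close> is encoded by the monomial coefficients \<open>c (k, l)\<close> of its pieces;
  \<open>Q_L_coeffs\<close> is the set of coefficient vectors of elements of \<open>Q_L\<close>.\<close>
definition coeff_poly :: "(nat \<times> nat \<Rightarrow> real) \<Rightarrow> nat \<Rightarrow> real poly" where
  "coeff_poly c k = (\<Sum>l<p. monom (c (k, l)) l)"

definition Q_L_coeffs :: "(nat \<times> nat \<Rightarrow> real) set" where
  "Q_L_coeffs = {c. (\<forall>k l. M \<le> k \<or> p \<le> l \<longrightarrow> c (k, l) = 0) \<and>
    (\<forall>k j. Suc k < M \<and> j < p - 1 \<longrightarrow> poly ((pderiv ^^ j) (coeff_poly c k)) (coarse_pt (Suc k))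
      = poly ((pderiv ^^ j) (coeff_poly c (Suc k))) (coarse_pt (Suc k)))}"

definition spline_of :: "(nat \<times> nat \<Rightarrow> real) \<Rightarrow> real \<Rightarrow> real" where
  "spline_of c x = poly (coeff_poly c (cell x)) x"

definition coeff_l1 :: "(nat \<times> nat \<Rightarrow> real) \<Rightarrow> real" where
  "coeff_l1 c = (\<Sum>i\<in>{..<M} \<times> {..<p}. \<bar>c i\<bar>)"

lemma coeff_coeff_poly: "coeff (coeff_poly c k) n = (if n < p then c (k, n) else 0)"
  unfolding coeff_poly_def by (simp add: coeff_sum)

lemma degree_coeff_poly: "degree (coeff_poly c k) \<le> p - 1"
  by (rule degree_le) (auto simp: coeff_coeff_poly)

lemma poly_higher_pderiv_coeff_poly:
  "poly ((pderiv ^^ j) (coeff_poly c k)) x = (\<Sum>l<p. c (k, l) * poly ((pderiv ^^ j) (monom 1 l)) x)"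
proof -
  have "coeff_poly c k = (\<Sum>l<p. smult (c (k, l)) (monom 1 l))"
    unfolding coeff_poly_def by (simp add: smult_monom)
  thus ?thesis by (simp add: higher_pderiv_sum higher_pderiv_smult poly_sum)
qed

lemma closed_Q_L_coeffs: "closed Q_L_coeffs"
proof -
  have "continuous_on UNIV (\<lambda>c. poly ((pderiv ^^ j) (coeff_poly c k)) x)" for j k x
    unfolding poly_higher_pderiv_coeff_poly by (intro continuous_intros) simp
  moreover have "open {x :: real. P}" for P by (cases P) auto
  ultimately show ?thesis unfolding Q_L_coeffs_def
    by (intro closed_Collect_conj closed_Collect_all closed_Collect_imp closed_Collect_eq
        continuous_on_const) simp_all
qed

lemma Q_L_coeffs_scale: "c \<in> Q_L_coeffs \<Longrightarrow> (\<lambda>i. t * c i) \<in> Q_L_coeffs"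
  unfolding Q_L_coeffs_def
  by (simp add: poly_higher_pderiv_coeff_poly mult.assoc flip: sum_distrib_left)

lemma coarse_spline_spline_of:
  assumes c: "c \<in> Q_L_coeffs"
  shows "coarse_spline a b N p L (spline_of c) (coeff_poly c)"
  unfolding coarse_spline_def coarse_spline_axioms_def
proof (intro conjI)
  show "dyadic_meshes a b N p L" by (rule dyadic_meshes_axioms)
  show "\<forall>k<M. degree (coeff_poly c k) \<le> p - 1" using degree_coeff_poly by simp
  show smooth: "\<forall>k. Suc k < M \<longrightarrow> (\<forall>j<p - 1.
      poly ((pderiv ^^ j) (coeff_poly c k)) (coarse_pt (Suc k))
      = poly ((pderiv ^^ j) (coeff_poly c (Suc k))) (coarse_pt (Suc k)))"
    using c unfolding Q_L_coeffs_def by blast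
  show "\<forall>k<M. \<forall>x\<in>{coarse_pt k..coarse_pt (Suc k)}. spline_of c x = poly (coeff_poly c k) x"
    using cell_eq smooth p unfolding spline_of_def by fastforce
qed

definition n_tests :: nat where "n_tests = N + p"

definition test :: "nat \<Rightarrow> real \<Rightarrow> real" where
  "test j = (if j \<le> N then v_test j else w_test (j - N))"

definition test_sum :: "(nat \<times> nat \<Rightarrow> real) \<Rightarrow> real" where
  "test_sum c = (\<Sum>j<n_tests. \<bar>\<Sum>k<M. \<Sum>l<p.
    c (k, l) * integral {coarse_pt k..coarse_pt (Suc k)} (\<lambda>x. test j x * x ^ l)\<bar>)"

lemma test_in_V_h: "j < n_tests \<Longrightarrow> test j \<in> V_h a b N p"
  unfolding test_def n_tests_def using v_test_in_V_h w_test_in_V_h by auto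

lemma orthogonal_to_tests:
  assumes orth: "\<And>j. j < n_tests \<Longrightarrow> l2_inner a b (test j) f = 0"
  shows "\<forall>i\<le>N. l2_inner a b (v_test i) f = 0"
    and "\<forall>k. 1 \<le> k \<and> k < p \<longrightarrow> l2_inner a b (w_test k) f = 0"
proof -
  show "\<forall>i\<le>N. l2_inner a b (v_test i) f = 0"
  proof (intro allI impI)
    fix i assume "i \<le> N"
    with orth[of i] p show "l2_inner a b (v_test i) f = 0" by (simp add: test_def n_tests_def)
  qed
  show "\<forall>k. 1 \<le> k \<and> k < p \<longrightarrow> l2_inner a b (w_test k) f = 0"
  proof (intro allI impI)
    fix k assume "1 \<le> k \<and> k < p"
    with orth[of "N + k"] show "l2_inner a b (w_test k) f = 0" by (simp add: test_def n_tests_def)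
  qed
qed

end

context coarse_spline
begin

definition piece_coeffs :: "nat \<times> nat \<Rightarrow> real" where
  "piece_coeffs = (\<lambda>(k, l). if k < M \<and> l < p then coeff (P k) l else 0)"

lemma coeff_poly_piece_coeffs: "k < M \<Longrightarrow> coeff_poly piece_coeffs k = P k"
proof (rule poly_eqI)
  fix n assume k: "k < M"
  show "coeff (coeff_poly piece_coeffs k) n = coeff (P k) n"
    using P_degree k p by (cases "n < p") (auto simp: coeff_coeff_poly piece_coeffs_def coeff_eq_0)
qed

lemma piece_coeffs_in_Q_L_coeffs: "piece_coeffs \<in> Q_L_coeffs"
  unfolding Q_L_coeffs_def
proof (intro CollectI conjI allI impI)
  fix k l assume "M \<le> k \<or> p \<le> l"
  thus "piece_coeffs (k, l) = 0" by (auto simp: piece_coeffs_def)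
next
  fix k j assume "Suc k < M \<and> j < p - 1"
  thus "poly ((pderiv ^^ j) (coeff_poly piece_coeffs k)) (coarse_pt (Suc k))
      = poly ((pderiv ^^ j) (coeff_poly piece_coeffs (Suc k))) (coarse_pt (Suc k))"
    using P_smooth by (simp add: coeff_poly_piece_coeffs)
qed

lemma test_sum_piece_coeffs: "test_sum piece_coeffs = (\<Sum>j<n_tests. \<bar>l2_inner a b (test j) q\<bar>)"
  unfolding test_sum_def
proof (rule sum.cong[OF refl])
  fix j assume "j \<in> {..<n_tests}"
  with l2_inner_eq_pieces[OF V_h_continuous_on[OF test_in_V_h]]
  show "\<bar>\<Sum>k<M. \<Sum>l<p.
        piece_coeffs (k, l) * integral {coarse_pt k..coarse_pt (Suc k)} (\<lambda>x. test j x * x ^ l)\<bar>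
      = \<bar>l2_inner a b (test j) q\<bar>"
    by (simp add: piece_coeffs_def)
qed

lemma coeff_l1_piece_coeffs_pos:
  assumes "nonzero_on a b q"
  shows "coeff_l1 piece_coeffs > 0"
proof -
  have "coeff_l1 piece_coeffs \<noteq> 0"
  proof
    assume "coeff_l1 piece_coeffs = 0"
    hence "\<forall>k<M. \<forall>l<p. piece_coeffs (k, l) = 0"
      unfolding coeff_l1_def by (subst (asm) sum_nonneg_eq_0_iff) auto
    hence "\<forall>k<M. P k = 0" using coeff_poly_piece_coeffs by (auto simp: coeff_poly_def)
    hence "\<forall>x\<in>{a..b}. q x = 0" using cell_mem cell_less q_eq_P by fastforce
    thus False using assms unfolding nonzero_on_def by blast
  qed
  thus ?thesis unfolding coeff_l1_def by (simp add: sum_nonneg order_le_neq_trans)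
qed

lemma abs_le_coeff_l1:
  assumes x: "x \<in> {a..b}"
  shows "\<bar>q x\<bar> \<le> (1 + \<bar>a\<bar> + \<bar>b\<bar>) ^ p * coeff_l1 piece_coeffs"
proof -
  define k where "k = cell x"
  have k: "k < M" and xk: "x \<in> {coarse_pt k..coarse_pt (Suc k)}" using cell_mem[OF x] cell_less
    unfolding k_def by auto
  have "q x = poly (coeff_poly piece_coeffs k) x" using q_eq_P k xk coeff_poly_piece_coeffs[OF k] by simp
  also have "\<dots> = (\<Sum>l<p. piece_coeffs (k, l) * x ^ l)"
    unfolding coeff_poly_def by (simp add: poly_sum poly_monom)
  also have "\<bar>\<dots>\<bar> \<le> (\<Sum>l<p. \<bar>piece_coeffs (k, l)\<bar> * (1 + \<bar>a\<bar> + \<bar>b\<bar>) ^ p)"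
  proof (rule order.trans[OF sum_abs sum_mono])
    fix l assume "l \<in> {..<p}"
    moreover have "\<bar>x\<bar> \<le> 1 + \<bar>a\<bar> + \<bar>b\<bar>" using x by auto
    ultimately have "\<bar>x\<bar> ^ l \<le> (1 + \<bar>a\<bar> + \<bar>b\<bar>) ^ p"
      by (meson order.trans power_increasing power_mono abs_ge_zero lessThan_iff less_imp_le
          le_add_same_cancel1 add_nonneg_nonneg zero_le_one)
    thus "\<bar>piece_coeffs (k, l) * x ^ l\<bar> \<le> \<bar>piece_coeffs (k, l)\<bar> * (1 + \<bar>a\<bar> + \<bar>b\<bar>) ^ p"
      by (simp add: abs_mult power_abs mult_left_mono)
  qed
  also have "\<dots> \<le> (1 + \<bar>a\<bar> + \<bar>b\<bar>) ^ p * coeff_l1 piece_coeffs"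
  proof -
    have "(\<Sum>l<p. \<bar>piece_coeffs (k, l)\<bar>) \<le> (\<Sum>k'<M. \<Sum>l<p. \<bar>piece_coeffs (k', l)\<bar>)"
      using k by (intro member_le_sum[of k "{..<M}" "\<lambda>k'. \<Sum>l<p. \<bar>piece_coeffs (k', l)\<bar>"])
         (auto intro: sum_nonneg)
    thus ?thesis unfolding coeff_l1_def
      by (simp add: sum.cartesian_product sum_distrib_right[symmetric] mult.commute)
  qed
  finally show ?thesis .
qed

lemma l2_norm_le_coeff_l1:
  "l2_norm a b q \<le> sqrt (b - a) * (1 + \<bar>a\<bar> + \<bar>b\<bar>) ^ p * coeff_l1 piece_coeffs"
proof -
  define B where "B = (1 + \<bar>a\<bar> + \<bar>b\<bar>) ^ p * coeff_l1 piece_coeffs"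
  have "l2_inner a b q q \<le> integral {a..b} (\<lambda>x. B\<^sup>2)" unfolding l2_inner_def
  proof (rule integral_le)
    show "(\<lambda>x. q x * q x) integrable_on {a..b}"
      by (intro integrable_continuous_interval continuous_intros q_continuous_on)
    fix x assume "x \<in> {a..b}"
    from abs_le_coeff_l1[OF this] have "\<bar>q x\<bar> * \<bar>q x\<bar> \<le> B * B"
      unfolding B_def by (intro mult_mono) auto
    thus "q x * q x \<le> B\<^sup>2" by (simp add: power2_eq_square abs_mult[symmetric])
  qed (rule integrable_continuous_interval[OF continuous_on_const])
  hence "l2_norm a b q \<le> sqrt ((b - a) * B\<^sup>2)" unfolding l2_norm_def using ab by simp
  also have "\<dots> = sqrt (b - a) * B"
    using ab coeff_l1_def by (simp add: real_sqrt_mult B_def sum_nonneg)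
  finally show ?thesis unfolding B_def by (simp add: mult.assoc)
qed

end

context dyadic_meshes
begin

lemma Q_L_imp_coarse_spline:
  assumes "q \<in> Q_L a b N p L"
  obtains P where "coarse_spline a b N p L q P"
  using assms dyadic_meshes_axioms
  unfolding Q_L_eq spline_space_def coarse_spline_def coarse_spline_axioms_def by blast

lemma test_sum_pos:
  assumes c: "c \<in> Q_L_coeffs" and pos: "coeff_l1 c > 0"
  shows "test_sum c > 0"
proof (rule ccontr)
  interpret S: coarse_spline a b N p L "spline_of c" "coeff_poly c"
    by (rule coarse_spline_spline_of[OF c])
  have "S.piece_coeffs = c"
  proof
    fix i :: "nat \<times> nat"
    show "S.piece_coeffs i = c i"
      using c unfolding S.piece_coeffs_def Q_L_coeffs_def by (cases i) (auto simp: coeff_coeff_poly)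
  qed
  hence "test_sum c = (\<Sum>j<n_tests. \<bar>l2_inner a b (test j) (spline_of c)\<bar>)"
    using S.test_sum_piece_coeffs by simp
  moreover assume "\<not> test_sum c > 0"
  ultimately have "(\<Sum>j<n_tests. \<bar>l2_inner a b (test j) (spline_of c)\<bar>) = 0"
    by (simp add: antisym sum_nonneg)
  hence "l2_inner a b (test j) (spline_of c) = 0" if "j < n_tests" for j
    using that by (simp add: sum_nonneg_eq_0_iff)
  note orthogonal_to_tests[OF this]
  hence "\<forall>k<M. coeff_poly c k = 0" by (rule S.pieces_eq_0_if_orthogonal)
  hence "c (k, l) = 0" if "k < M" "l < p" for k l using that by (metis coeff_coeff_poly coeff_0)
  hence "coeff_l1 c = 0" unfolding coeff_l1_def by (auto intro!: sum.neutral)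
  thus False using pos by simp
qed

lemma test_sum_lower_bound: "\<exists>\<beta>>0. \<forall>c\<in>Q_L_coeffs. \<beta> * coeff_l1 c \<le> test_sum c"
  unfolding coeff_l1_def
proof (rule homogeneous_lower_bound_l1[OF _ closed_Q_L_coeffs])
  show "continuous_on UNIV test_sum"
    unfolding test_sum_def by (intro continuous_intros) simp
  show "test_sum (\<lambda>i. t * c i) = t * test_sum c" if "t > 0" for c t
    unfolding test_sum_def using that
    by (simp add: abs_mult sum_distrib_left mult.assoc flip: sum_distrib_left)
  show "c i = 0" if "c \<in> Q_L_coeffs" "i \<notin> {..<M} \<times> {..<p}" for c i
    using that unfolding Q_L_coeffs_def by (cases i) auto
  show "test_sum c > 0" if "c \<in> Q_L_coeffs" "(\<Sum>i\<in>{..<M} \<times> {..<p}. \<bar>c i\<bar>) > 0" for c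
    using test_sum_pos that unfolding coeff_l1_def by blast
  show "test_sum c \<ge> 0" for c unfolding test_sum_def by (simp add: sum_nonneg)
qed (auto simp: Q_L_coeffs_scale)

text \<open>\<open>\<beta>\<close> bounds the test inner products below in terms of the coefficients; the other factors come
  from picking the largest inner product, from the norms of the test functions, and from bounding
  \<open>\<parallel>q\<parallel>\<close> by its coefficients (\<open>l2_norm_le_coeff_l1\<close>).\<close>
definition inf_sup_bound :: "real \<Rightarrow> real" where
  "inf_sup_bound \<beta> = \<beta> / (real n_tests * (1 + (\<Sum>j<n_tests. l2_norm a b (test j)))
    * (sqrt (b - a) * (1 + \<bar>a\<bar> + \<bar>b\<bar>) ^ p))"

lemma inf_sup_bound_pos: "\<beta> > 0 \<Longrightarrow> inf_sup_bound \<beta> > 0"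
  unfolding inf_sup_bound_def n_tests_def using ab N
  by (intro divide_pos_pos mult_pos_pos) (auto intro!: add_pos_nonneg sum_nonneg l2_norm_nonneg)

lemma const_1_in_Q_L: "(\<lambda>_. 1) \<in> Q_L a b N p L"
  unfolding Q_L_eq spline_space_def by (intro CollectI exI[of _ "\<lambda>_. 1"]) auto

lemma l2_cosine_bdd_above:
  assumes "q \<in> Q_L a b N p L"
  shows "bdd_above ((\<lambda>v. l2_inner a b v q / (l2_norm a b v * l2_norm a b q))
    ` {v \<in> V_h a b N p. nonzero_on a b v})"
  using l2_cosine_le_1 V_h_continuous_on Q_L_continuous_on[OF assms] by (intro bdd_aboveI[of _ 1]) auto

lemma signed_test_in_V_h:
  assumes "j < n_tests"
  obtains u where "u \<in> V_h a b N p" "l2_inner a b u q = \<bar>l2_inner a b (test j) q\<bar>"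
    "l2_norm a b u = l2_norm a b (test j)"
proof (cases "l2_inner a b (test j) q \<ge> 0")
  case True
  with test_in_V_h[OF assms] show ?thesis by (intro that) auto
next
  case False
  with test_in_V_h[OF assms] V_h_uminus show ?thesis
    by (intro that[of "\<lambda>x. - test j x"]) (auto simp: l2_inner_uminus_left l2_norm_uminus)
qed

lemma inf_sup_witness:
  assumes \<beta>: "\<beta> > 0" "\<forall>c\<in>Q_L_coeffs. \<beta> * coeff_l1 c \<le> test_sum c"
    and q: "q \<in> Q_L a b N p L" "nonzero_on a b q"
  shows "\<exists>v\<in>{v \<in> V_h a b N p. nonzero_on a b v}.
    inf_sup_bound \<beta> \<le> l2_inner a b v q / (l2_norm a b v * l2_norm a b q)"
proof -
  obtain P where "coarse_spline a b N p L q P" using Q_L_imp_coarse_spline[OF q(1)] .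
  then interpret Q: coarse_spline a b N p L q P .
  define S T B where "S = coeff_l1 Q.piece_coeffs" and "T = (\<Sum>j<n_tests. l2_norm a b (test j))"
    and "B = sqrt (b - a) * (1 + \<bar>a\<bar> + \<bar>b\<bar>) ^ p"
  have S: "S > 0" using Q.coeff_l1_piece_coeffs_pos[OF q(2)] unfolding S_def .
  have T: "T \<ge> 0" unfolding T_def by (intro sum_nonneg l2_norm_nonneg)
  have B: "B > 0" unfolding B_def using ab by simp
  have n: "n_tests > 0" unfolding n_tests_def using N by simp
  have "\<beta> * S \<le> (\<Sum>j<n_tests. \<bar>l2_inner a b (test j) q\<bar>)"
    using \<beta>(2) Q.piece_coeffs_in_Q_L_coeffs Q.test_sum_piece_coeffs unfolding S_def by metis
  then obtain j where j: "j < n_tests" "\<beta> * S / real n_tests \<le> \<bar>l2_inner a b (test j) q\<bar>"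
    using exists_term_ge_average[OF n] by blast
  obtain u where u: "u \<in> V_h a b N p" "l2_inner a b u q = \<bar>l2_inner a b (test j) q\<bar>"
    "l2_norm a b u = l2_norm a b (test j)"
    using signed_test_in_V_h[OF j(1)] .
  have inner: "l2_inner a b u q \<ge> \<beta> * S / real n_tests" "\<beta> * S / real n_tests > 0"
    using j(2) u(2) \<beta>(1) S n by simp_all
  have "l2_norm a b u \<le> T" unfolding u(3) T_def using j(1)
    by (intro member_le_sum) (auto simp: l2_norm_nonneg)
  moreover have "l2_norm a b q \<le> B * S" using Q.l2_norm_le_coeff_l1 unfolding B_def S_def .
  moreover have "l2_inner a b u q \<le> l2_norm a b u * l2_norm a b q"
    using l2_inner_Cauchy_Schwarz[OF V_h_continuous_on[OF u(1)] Q.q_continuous_on] by simp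
  ultimately have "(\<beta> * S / real n_tests) / ((1 + T) * (B * S))
      \<le> l2_inner a b u q / (l2_norm a b u * l2_norm a b q)"
    using inner l2_norm_nonneg[of a b u] l2_norm_nonneg[of a b q]
    by (intro frac_le mult_mono) auto
  moreover have "inf_sup_bound \<beta> = (\<beta> * S / real n_tests) / ((1 + T) * (B * S))"
    unfolding inf_sup_bound_def T_def[symmetric] B_def[symmetric] using S by simp
  moreover have "nonzero_on a b u" using inner by (intro nonzero_on_if_l2_inner_ne_0[of _ _ _ q]) simp
  ultimately show ?thesis using u(1) by auto
qed

end

theorem mainTheorem5:
  fixes a b :: real and N p L :: nat
  assumes "a < b" and "N \<ge> 1" and "p \<ge> 2" and "L \<ge> 1" and "2 ^ L dvd N"
  shows "\<exists>\<alpha>>0. inf_sup_const (V_h a b N p) (Q_L a b N p L) a b \<ge> \<alpha>"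
proof -
  interpret dyadic_meshes a b N p L by unfold_locales (use assms in auto)
  obtain \<beta> where \<beta>: "\<beta> > 0" "\<forall>c\<in>Q_L_coeffs. \<beta> * coeff_l1 c \<le> test_sum c"
    using test_sum_lower_bound by blast
  let ?V = "{v \<in> V_h a b N p. nonzero_on a b v}" and ?Q = "{q \<in> Q_L a b N p L. nonzero_on a b q}"
  let ?ratio = "\<lambda>q v. l2_inner a b v q / (l2_norm a b v * l2_norm a b q)"
  have "inf_sup_bound \<beta> \<le> Inf ((\<lambda>q. Sup (?ratio q ` ?V)) ` ?Q)"
  proof (rule cInf_greatest)
    have "(\<lambda>_. 1) \<in> ?Q" using const_1_in_Q_L assms(1) unfolding nonzero_on_def by auto
    thus "(\<lambda>q. Sup (?ratio q ` ?V)) ` ?Q \<noteq> {}" by blast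
  next
    fix r assume "r \<in> (\<lambda>q. Sup (?ratio q ` ?V)) ` ?Q"
    then obtain q where q: "q \<in> Q_L a b N p L" "nonzero_on a b q" and r: "r = Sup (?ratio q ` ?V)"
      by blast
    obtain v where "v \<in> ?V" and "inf_sup_bound \<beta> \<le> ?ratio q v"
      using inf_sup_witness[OF \<beta> q] by blast
    moreover from this(1) have "?ratio q v \<le> r"
      unfolding r by (intro cSup_upper imageI l2_cosine_bdd_above q(1))
    ultimately show "inf_sup_bound \<beta> \<le> r" by linarith
  qed
  thus ?thesis unfolding inf_sup_const_def using inf_sup_bound_pos[OF \<beta>(1)] by blast
qed

end
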